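(* Consider contexts $X$, actions $A$, random embeddings $R^{(1)},R^{(2)}$ and real outcomes $Y$ whose joint density under a policy $\pi$ is $p_\pi(x,a,r_1,r_2,y)=p(x)\pi(a\mid x)p(r_1\mid x,a)p(r_2\mid r_1)p(y\mid r_2)$, where the factors other than $\pi$ do not depend on $\pi$ (so $R^{(2)}\perp\!\!\!\perp(X,A)\mid R^{(1)}$ and $Y\perp\!\!\!\perp(R^{(1)},X,A)\mid R^{(2)}$). Let $\pi^b,\pi^*$ be behaviour and target policies with $\pi^*(a\mid x)>0\Rightarrow\pi^b(a\mid x)>0$, and let $(x_i,a_i,r^{(1)}_i,r^{(2)}_i,y_i)_{i=1}^n$ be i.i.d. from $p_{\pi^b}$. Define with exact weights $$\hat\theta_{\mathrm{IPW}}=\frac1n\sum_i\frac{\pi^*(a_i\mid x_i)}{\pi^b(a_i\mid x_i)}y_i,\quad\hat\theta^{(j)}_{\mathrm{G\text{-}MIPS}}=\frac1n\sum_i\frac{p_{\pi^*}(r^{(j)}_i)}{p_{\pi^b}(r^{(j)}_i)}y_i\ (j=1,2),\quad\hat\theta_{\mathrm{MR}}=\frac1n\sum_i\frac{p_{\pi^*}(y_i)}{p_{\pi^b}(y_i)}y_i,$$ where $p_\pi(r^{(j)})$ and $p_\pi(y)$ are marginals of $p_\pi$. Then $$\mathbb{E}_{\pi^b}[\hat\theta_{\mathrm{IPW}}]=\mathbb{E}_{\pi^b}[\hat\theta^{(1)}_{\mathrm{G\text{-}MIPS}}]=\mathbb{E}_{\pi^b}[\hat\theta^{(2)}_{\mathrm{G\text{-}MIPS}}]=\mathbb{E}_{\pi^b}[\hat\theta_{\mathrm{MR}}]=\mathbb{E}_{\pi^*}[Y],$$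 and $\mathbb{V}_{\pi^b}[\hat\theta_{\mathrm{IPW}}]\ge\mathbb{V}_{\pi^b}[\hat\theta^{(1)}_{\mathrm{G\text{-}MIPS}}]\ge\mathbb{V}_{\pi^b}[\hat\theta^{(2)}_{\mathrm{G\text{-}MIPS}}]\ge\mathbb{V}_{\pi^b}[\hat\theta_{\mathrm{MR}}]$.
   Context: $\mathbb{E}_\pi,\mathbb{V}_\pi$ denote expectation/variance under $p_\pi$ (and the i.i.d. sample). *)

theory Defs
  imports "HOL-Probability.Probability"
begin

text \<open>Sample points are tuples (x, a, r1, r2, y). Densities are taken w.r.t. base
measures MX, MA, MR1 (for R1), MR2 (for R2) and Lebesgue measure on the real outcome.\<close>

definition jdens ::
  "('x \<Rightarrow> real) \<Rightarrow> ('x \<Rightarrow> 'a \<Rightarrow> real) \<Rightarrow> ('x \<Rightarrow> 'a \<Rightarrow> 'r \<Rightarrow> real)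
   \<Rightarrow> ('r \<Rightarrow> 's \<Rightarrow> real) \<Rightarrow> ('s \<Rightarrow> real \<Rightarrow> real) \<Rightarrow> 'x \<times> 'a \<times> 'r \<times> 's \<times> real \<Rightarrow> real" where
  "jdens px pol q1 q2 qy = (\<lambda>(x, a, r, s, y). px x * pol x a * q1 x a r * q2 r s * qy s y)"

definition jmeas ::
  "'x measure \<Rightarrow> 'a measure \<Rightarrow> 'r measure \<Rightarrow> 's measure \<Rightarrow>
   ('x \<Rightarrow> real) \<Rightarrow> ('x \<Rightarrow> 'a \<Rightarrow> real) \<Rightarrow> ('x \<Rightarrow> 'a \<Rightarrow> 'r \<Rightarrow> real)
   \<Rightarrow> ('r \<Rightarrow> 's \<Rightarrow> real) \<Rightarrow> ('s \<Rightarrow> real \<Rightarrow> real) \<Rightarrow> ('x \<times> 'a \<times> 'r \<times> 's \<times> real) measure" where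
  "jmeas MX MA MR1 MR2 px pol q1 q2 qy =
     density (MX \<Otimes>\<^sub>M MA \<Otimes>\<^sub>M MR1 \<Otimes>\<^sub>M MR2 \<Otimes>\<^sub>M lborel)
       (\<lambda>\<omega>. ennreal (jdens px pol q1 q2 qy \<omega>))"

definition marg_r1 where
  "marg_r1 MX MA MR2 px pol q1 q2 qy r =
     (\<integral>(x, a, s, y). jdens px pol q1 q2 qy (x, a, r, s, y) \<partial>(MX \<Otimes>\<^sub>M MA \<Otimes>\<^sub>M MR2 \<Otimes>\<^sub>M lborel))"

definition marg_r2 where
  "marg_r2 MX MA MR1 px pol q1 q2 qy s =
     (\<integral>(x, a, r, y). jdens px pol q1 q2 qy (x, a, r, s, y) \<partial>(MX \<Otimes>\<^sub>M MA \<Otimes>\<^sub>M MR1 \<Otimes>\<^sub>M lborel))"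

definition marg_y where
  "marg_y MX MA MR1 MR2 px pol q1 q2 qy y =
     (\<integral>(x, a, r, s). jdens px pol q1 q2 qy (x, a, r, s, y) \<partial>(MX \<Otimes>\<^sub>M MA \<Otimes>\<^sub>M MR1 \<Otimes>\<^sub>M MR2))"

definition yof :: "'x \<times> 'a \<times> 'r \<times> 's \<times> real \<Rightarrow> real" where
  "yof = (\<lambda>(x, a, r, s, y). y)"

definition west :: "nat \<Rightarrow> ('x \<times> 'a \<times> 'r \<times> 's \<times> real \<Rightarrow> real)
                   \<Rightarrow> (nat \<Rightarrow> 'x \<times> 'a \<times> 'r \<times> 's \<times> real) \<Rightarrow> real" where
  "west n w \<omega> = (\<Sum>i<n. w (\<omega> i) * yof (\<omega> i)) / real n"

definition var :: "'b measure \<Rightarrow> ('b \<Rightarrow> real) \<Rightarrow> real" where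
  "var M f = (\<integral>\<omega>. (f \<omega> - (\<integral>\<omega>'. f \<omega>' \<partial>M))\<^sup>2 \<partial>M)"

end

(*
  Each estimator reweights the outcome by the density ratio w = p_pi* / p_pib of one node Z of the
  chain (X, A) -> R1 -> R2 -> Y.  Since p_pib * w = p_pi* almost everywhere, w(Z) Y has mean
  E_pi*[Y] under pi^b, so all four estimators are unbiased and their variances differ only
  through the second moments E_pib[w(Z)^2 Y^2].  Pushing the densities through the next kernel,
  the ratio at the next node is the pi^b-conditional expectation of the ratio at the current
  node; by Cauchy-Schwarz (conditional Jensen) its square is at most the conditional expectation
  of the square.  As Y depends on the current node only through the next one, the second
  moments, and hence the variances, decrease along the chain.
*)

theory Submission
  imports Defs
begin

section \<open>Sample means of i.i.d. samples\<close>

definition sample_mean :: "nat \<Rightarrow> ('b \<Rightarrow> real) \<Rightarrow> (nat \<Rightarrow> 'b) \<Rightarrow> real" where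
  "sample_mean n g \<omega> = (\<Sum>i<n. g (\<omega> i)) / real n"

context prob_space
begin

lemma product_sigma_finite_const: "product_sigma_finite (\<lambda>_. M)"
  by (simp add: product_sigma_finite_def prob_space_imp_sigma_finite prob_space_axioms)

lemma integrable_PiM_component:
  fixes f :: "'a \<Rightarrow> real" and n :: nat
  shows "i < n \<Longrightarrow> integrable M f \<Longrightarrow> integrable (PiM {..<n} (\<lambda>_. M)) (\<lambda>\<omega>. f (\<omega> i))"
  using integrable_distr_eq[of "\<lambda>\<omega>. \<omega> i" "PiM {..<n} (\<lambda>_. M)" M f]
    distr_PiM_component[of "{..<n}" "\<lambda>_. M" i] prob_space_axioms
  by (force dest: borel_measurable_integrable)

lemma integral_PiM_component:
  fixes f :: "'a \<Rightarrow> real" and n :: nat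
  shows "i < n \<Longrightarrow> f \<in> borel_measurable M \<Longrightarrow> (\<integral>\<omega>. f (\<omega> i) \<partial>PiM {..<n} (\<lambda>_. M)) = expectation f"
  using integral_distr[of "\<lambda>\<omega>. \<omega> i" "PiM {..<n} (\<lambda>_. M)" M f]
    distr_PiM_component[of "{..<n}" "\<lambda>_. M" i] prob_space_axioms
  by simp

lemma integral_PiM_two_components:
  fixes f g :: "'a \<Rightarrow> real" and n :: nat
  assumes ij: "i < n" "j < n" "i \<noteq> j" and f: "integrable M f" and g: "integrable M g"
  shows "integrable (PiM {..<n} (\<lambda>_. M)) (\<lambda>\<omega>. f (\<omega> i) * g (\<omega> j))"
    and "(\<integral>\<omega>. f (\<omega> i) * g (\<omega> j) \<partial>PiM {..<n} (\<lambda>_. M)) = expectation f * expectation g"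
proof -
  have prob_1: "prob (space M) = 1" by (rule prob_space)
  interpret product_sigma_finite "\<lambda>_. M" by (rule product_sigma_finite_const)
  define F where "F k = (if k = i then f else if k = j then g else (\<lambda>_. 1))" for k
  have F: "k \<in> {..<n} \<Longrightarrow> integrable M (F k)" for k
    using f g by (simp add: F_def)
  have prod_F: "(\<Prod>k<n. F k (\<omega> k)) = f (\<omega> i) * g (\<omega> j)" for \<omega>
  proof -
    have "(\<Prod>k<n. F k (\<omega> k)) = (\<Prod>k\<in>{i, j}. F k (\<omega> k))"
      using ij by (intro prod.mono_neutral_right) (auto simp: F_def)
    then show ?thesis using ij by (simp add: F_def)
  qed
  show "integrable (PiM {..<n} (\<lambda>_. M)) (\<lambda>\<omega>. f (\<omega> i) * g (\<omega> j))"
    using product_integrable_prod[of "{..<n}" F] F by (simp add: prod_F)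
  have "(\<integral>\<omega>. f (\<omega> i) * g (\<omega> j) \<partial>PiM {..<n} (\<lambda>_. M)) = (\<Prod>k<n. expectation (F k))"
    using product_integral_prod[of "{..<n}" F] F by (simp add: prod_F)
  also have "\<dots> = (\<Prod>k\<in>{i, j}. expectation (F k))"
    using ij by (intro prod.mono_neutral_right) (auto simp: F_def prob_1)
  also have "\<dots> = expectation f * expectation g"
    using ij by (simp add: F_def)
  finally show "(\<integral>\<omega>. f (\<omega> i) * g (\<omega> j) \<partial>PiM {..<n} (\<lambda>_. M)) = expectation f * expectation g" .
qed

lemma integral_sample_mean:
  assumes "integrable M g" "n \<ge> 1"
  shows "(\<integral>\<omega>. sample_mean n g \<omega> \<partial>PiM {..<n} (\<lambda>_. M)) = expectation g"
proof -
  have "(\<integral>\<omega>. (\<Sum>i<n. g (\<omega> i)) \<partial>PiM {..<n} (\<lambda>_. M)) = (\<Sum>i<n. expectation g)"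
    using integrable_PiM_component[of _ n g] integral_PiM_component[of _ n g] assms(1)
    by (subst Bochner_Integration.integral_sum) auto
  then show ?thesis
    using assms(2) by (simp add: sample_mean_def)
qed

lemma var_sample_mean:
  fixes g :: "'a \<Rightarrow> real"
  assumes g[measurable]: "g \<in> borel_measurable M" and g2: "integrable M (\<lambda>x. (g x)\<^sup>2)" and n: "n \<ge> 1"
  shows "var (PiM {..<n} (\<lambda>_. M)) (sample_mean n g) = var M g / real n"
proof -
  let ?S = "PiM {..<n} (\<lambda>_. M)"
  have gi: "integrable M g" by (rule square_integrable_imp_integrable[OF g g2])
  define h where "h = (\<lambda>x. g x - expectation g)"
  have h: "integrable M h"
    using gi by (simp add: h_def)
  have h0: "expectation h = 0"
    using gi by (simp add: h_def prob_space)
  have h2: "integrable M (\<lambda>x. (h x)\<^sup>2)"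
    unfolding h_def power2_diff using gi g2 by (intro Bochner_Integration.integrable_diff Bochner_Integration.integrable_add) auto
  have cov_integrable: "integrable ?S (\<lambda>\<omega>. h (\<omega> i) * h (\<omega> j))" if "i < n" "j < n" for i j
    using that integral_PiM_two_components(1)[OF _ _ _ h h] integrable_PiM_component[OF _ h2]
    by (cases "i = j") (simp_all add: power2_eq_square)
  have cov: "(\<integral>\<omega>. h (\<omega> i) * h (\<omega> j) \<partial>?S) = (if i = j then var M g else 0)"
    if "i < n" "j < n" for i j
  proof (cases "i = j")
    case True
    then show ?thesis
      using that integral_PiM_component[of i n "\<lambda>x. (h x)\<^sup>2"]
      by (simp add: var_def h_def power2_eq_square)
  qed (use that integral_PiM_two_components(2)[OF _ _ _ h h] h0 in simp)
  have "sample_mean n g \<omega> - (\<integral>\<omega>. sample_mean n g \<omega> \<partial>?S) = (\<Sum>i<n. h (\<omega> i)) / real n" for \<omega>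
    unfolding integral_sample_mean[OF gi n] using n by (simp add: sample_mean_def h_def sum_subtractf field_simps)
  then have "var ?S (sample_mean n g) = (\<integral>\<omega>. (\<Sum>i<n. \<Sum>j<n. h (\<omega> i) * h (\<omega> j)) / (real n)\<^sup>2 \<partial>?S)"
    by (simp add: var_def power_divide power2_eq_square sum_product)
  also have "\<dots> = (\<Sum>i<n. \<Sum>j<n. if i = j then var M g else 0) / (real n)\<^sup>2"
  proof -
    have "(\<integral>\<omega>. (\<Sum>i<n. \<Sum>j<n. h (\<omega> i) * h (\<omega> j)) \<partial>?S) = (\<Sum>i<n. \<Sum>j<n. \<integral>\<omega>. h (\<omega> i) * h (\<omega> j) \<partial>?S)"
      using cov_integrable
      by (subst Bochner_Integration.integral_sum)
        (auto intro!: Bochner_Integration.integral_sum)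
    then show ?thesis using cov by simp
  qed
  also have "\<dots> = var M g / real n"
    using n by (simp add: power2_eq_square)
  finally show ?thesis .
qed

end

section \<open>Nonnegative integrals\<close>

lemma integral_eq_of_nn_integral_parts:
  fixes f :: "'a \<Rightarrow> real" and g :: "'b \<Rightarrow> real"
  assumes f: "integrable M f"
    and pos: "(\<integral>\<^sup>+ x. ennreal (f x) \<partial>M) = (\<integral>\<^sup>+ y. ennreal (g y) \<partial>N)"
    and neg: "(\<integral>\<^sup>+ x. ennreal (- f x) \<partial>M) = (\<integral>\<^sup>+ y. ennreal (- g y) \<partial>N)"
    and g[measurable]: "g \<in> borel_measurable N"
  shows "integrable N g" and "(\<integral>x. f x \<partial>M) = (\<integral>y. g y \<partial>N)"
proof -
  show g_int: "integrable N g"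
    unfolding real_integrable_def using integrableD(2,3)[OF f] pos neg by simp
  show "(\<integral>x. f x \<partial>M) = (\<integral>y. g y \<partial>N)"
    by (simp add: real_lebesgue_integral_def[OF f] real_lebesgue_integral_def[OF g_int] pos neg)
qed

lemma nn_integral_weighted_ratio_square_le:
  fixes g w :: "'a \<Rightarrow> real"
  assumes [measurable]: "g \<in> borel_measurable M" "w \<in> borel_measurable M"
    and g_nonneg: "\<And>x. 0 \<le> g x" and w_nonneg: "\<And>x. 0 \<le> w x"
    and G: "(\<integral>\<^sup>+ x. ennreal (g x) \<partial>M) = ennreal G" and G_nonneg: "0 \<le> G"
    and F: "(\<integral>\<^sup>+ x. ennreal (g x * w x) \<partial>M) = ennreal F" and F_nonneg: "0 \<le> F"
  shows "ennreal (G * (F / G)\<^sup>2) \<le> (\<integral>\<^sup>+ x. ennreal (g x * (w x)\<^sup>2) \<partial>M)"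
proof (cases "G = 0")
  case False
  \<comment> \<open>expand \<open>0 \<le> \<integral> g (w - c)\<^sup>2\<close> at the minimizing constant \<open>c = F / G\<close>\<close>
  define c where "c = F / G"
  have c_nonneg: "0 \<le> c"
    using F_nonneg G_nonneg by (simp add: c_def)
  have pointwise: "ennreal (2 * c) * ennreal (g x * w x) \<le> ennreal (g x * (w x)\<^sup>2) + ennreal (c\<^sup>2) * ennreal (g x)" for x
  proof -
    have "0 \<le> g x * (w x - c)\<^sup>2"
      using g_nonneg by simp
    then have "2 * c * (g x * w x) \<le> g x * (w x)\<^sup>2 + c\<^sup>2 * g x"
      by (simp add: power2_eq_square algebra_simps)
    then show ?thesis
      using g_nonneg c_nonneg by (simp add: ennreal_mult'[symmetric] ennreal_plus[symmetric] del: ennreal_plus)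
  qed
  have "ennreal (2 * c * F) = (\<integral>\<^sup>+ x. ennreal (2 * c) * ennreal (g x * w x) \<partial>M)"
    using c_nonneg F_nonneg by (simp add: nn_integral_cmult F ennreal_mult)
  also have "\<dots> \<le> (\<integral>\<^sup>+ x. ennreal (g x * (w x)\<^sup>2) + ennreal (c\<^sup>2) * ennreal (g x) \<partial>M)"
    by (intro nn_integral_mono pointwise)
  also have "\<dots> = (\<integral>\<^sup>+ x. ennreal (g x * (w x)\<^sup>2) \<partial>M) + ennreal (c\<^sup>2 * G)"
    using G_nonneg by (simp add: nn_integral_add nn_integral_cmult G ennreal_mult)
  finally have bound: "ennreal (2 * c * F) \<le> (\<integral>\<^sup>+ x. ennreal (g x * (w x)\<^sup>2) \<partial>M) + ennreal (c\<^sup>2 * G)" .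
  have "c\<^sup>2 * G = c * F" and "G * (F / G)\<^sup>2 = c * F"
    using False by (simp_all add: c_def power2_eq_square)
  then show ?thesis
    using bound c_nonneg F_nonneg G_nonneg
    by (cases "\<integral>\<^sup>+ x. ennreal (g x * (w x)\<^sup>2) \<partial>M" rule: ennreal_cases)
      (auto simp: ennreal_plus[symmetric] mult.commute simp del: ennreal_plus)
qed simp

lemma nn_integral_density_ratio:
  assumes "AE x in M. a x * w x = b x" and "\<And>x. 0 \<le> a x"
  shows "(\<integral>\<^sup>+ x. ennreal (a x) * ennreal (w x) * h x \<partial>M) = (\<integral>\<^sup>+ x. ennreal (b x) * h x \<partial>M)"
  using assms(1) by (rule nn_integral_cong_AE[OF eventually_mono]) (simp add: ennreal_mult'[symmetric] assms(2))

lemma nn_integral_cmult_factor: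
  assumes "(\<lambda>n. ennreal (k n) * h n) \<in> borel_measurable N" and "0 \<le> A" and "\<And>n. 0 \<le> k n"
  shows "(\<integral>\<^sup>+ n. ennreal (A * k n) * (B * h n) \<partial>N) = ennreal A * B * (\<integral>\<^sup>+ n. ennreal (k n) * h n \<partial>N)"
proof -
  have "(\<integral>\<^sup>+ n. ennreal (A * k n) * (B * h n) \<partial>N) = (\<integral>\<^sup>+ n. (ennreal A * B) * (ennreal (k n) * h n) \<partial>N)"
    using assms(2,3) by (simp add: ennreal_mult mult_ac)
  also have "\<dots> = ennreal A * B * (\<integral>\<^sup>+ n. ennreal (k n) * h n \<partial>N)"
    by (rule nn_integral_cmult) (rule assms(1))
  finally show ?thesis .
qed

lemma nn_integral_iterated3:
  assumes B: "sigma_finite_measure B" and C: "sigma_finite_measure C"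
    and f: "f \<in> borel_measurable (A \<Otimes>\<^sub>M B \<Otimes>\<^sub>M C)"
  shows "(\<integral>\<^sup>+ p. f p \<partial>(A \<Otimes>\<^sub>M B \<Otimes>\<^sub>M C)) = (\<integral>\<^sup>+ a. \<integral>\<^sup>+ b. \<integral>\<^sup>+ c. f (a, b, c) \<partial>C \<partial>B \<partial>A)"
proof -
  have "(\<integral>\<^sup>+ p. f p \<partial>(A \<Otimes>\<^sub>M B \<Otimes>\<^sub>M C)) = (\<integral>\<^sup>+ a. \<integral>\<^sup>+ q. f (a, q) \<partial>(B \<Otimes>\<^sub>M C) \<partial>A)"
    by (rule sigma_finite_measure.nn_integral_fst[symmetric, OF sigma_finite_pair_measure[OF B C] f])
  also have "\<dots> = (\<integral>\<^sup>+ a. \<integral>\<^sup>+ b. \<integral>\<^sup>+ c. f (a, b, c) \<partial>C \<partial>B \<partial>A)"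
    by (intro nn_integral_cong sigma_finite_measure.nn_integral_fst[symmetric, OF C]
        measurable_compose[OF measurable_Pair1' f]) auto
  finally show ?thesis .
qed

lemma nn_integral_iterated4:
  assumes B: "sigma_finite_measure B" and C: "sigma_finite_measure C" and D: "sigma_finite_measure D"
    and f: "f \<in> borel_measurable (A \<Otimes>\<^sub>M B \<Otimes>\<^sub>M C \<Otimes>\<^sub>M D)"
  shows "(\<integral>\<^sup>+ p. f p \<partial>(A \<Otimes>\<^sub>M B \<Otimes>\<^sub>M C \<Otimes>\<^sub>M D)) =
    (\<integral>\<^sup>+ a. \<integral>\<^sup>+ b. \<integral>\<^sup>+ c. \<integral>\<^sup>+ d. f (a, b, c, d) \<partial>D \<partial>C \<partial>B \<partial>A)"
proof -
  have "(\<integral>\<^sup>+ p. f p \<partial>(A \<Otimes>\<^sub>M B \<Otimes>\<^sub>M C \<Otimes>\<^sub>M D)) = (\<integral>\<^sup>+ a. \<integral>\<^sup>+ q. f (a, q) \<partial>(B \<Otimes>\<^sub>M C \<Otimes>\<^sub>M D) \<partial>A)"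
    by (rule sigma_finite_measure.nn_integral_fst[symmetric, OF
          sigma_finite_pair_measure[OF B sigma_finite_pair_measure[OF C D]] f])
  also have "\<dots> = (\<integral>\<^sup>+ a. \<integral>\<^sup>+ b. \<integral>\<^sup>+ c. \<integral>\<^sup>+ d. f (a, b, c, d) \<partial>D \<partial>C \<partial>B \<partial>A)"
    by (intro nn_integral_cong nn_integral_iterated3[OF C D] measurable_compose[OF measurable_Pair1' f]) auto
  finally show ?thesis .
qed

lemma nn_integral_iterated5:
  assumes B: "sigma_finite_measure B" and C: "sigma_finite_measure C" and D: "sigma_finite_measure D"
    and E: "sigma_finite_measure E" and f: "f \<in> borel_measurable (A \<Otimes>\<^sub>M B \<Otimes>\<^sub>M C \<Otimes>\<^sub>M D \<Otimes>\<^sub>M E)"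
  shows "(\<integral>\<^sup>+ p. f p \<partial>(A \<Otimes>\<^sub>M B \<Otimes>\<^sub>M C \<Otimes>\<^sub>M D \<Otimes>\<^sub>M E)) =
    (\<integral>\<^sup>+ a. \<integral>\<^sup>+ b. \<integral>\<^sup>+ c. \<integral>\<^sup>+ d. \<integral>\<^sup>+ e. f (a, b, c, d, e) \<partial>E \<partial>D \<partial>C \<partial>B \<partial>A)"
proof -
  have "(\<integral>\<^sup>+ p. f p \<partial>(A \<Otimes>\<^sub>M B \<Otimes>\<^sub>M C \<Otimes>\<^sub>M D \<Otimes>\<^sub>M E)) =
      (\<integral>\<^sup>+ a. \<integral>\<^sup>+ q. f (a, q) \<partial>(B \<Otimes>\<^sub>M C \<Otimes>\<^sub>M D \<Otimes>\<^sub>M E) \<partial>A)"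
    by (rule sigma_finite_measure.nn_integral_fst[symmetric, OF sigma_finite_pair_measure[OF B
          sigma_finite_pair_measure[OF C sigma_finite_pair_measure[OF D E]]] f])
  also have "\<dots> = (\<integral>\<^sup>+ a. \<integral>\<^sup>+ b. \<integral>\<^sup>+ c. \<integral>\<^sup>+ d. \<integral>\<^sup>+ e. f (a, b, c, d, e) \<partial>E \<partial>D \<partial>C \<partial>B \<partial>A)"
    by (intro nn_integral_cong nn_integral_iterated4[OF C D E] measurable_compose[OF measurable_Pair1' f]) auto
  finally show ?thesis .
qed

section \<open>Transition kernels\<close>

locale transition_kernel = pair_sigma_finite M N
  for M :: "'m measure" and N :: "'n measure" +
  fixes k :: "'m \<Rightarrow> 'n \<Rightarrow> real"
  assumes kernel_measurable: "(\<lambda>(m, n). k m n) \<in> borel_measurable (M \<Otimes>\<^sub>M N)"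
    and kernel_nonneg: "\<And>m n. 0 \<le> k m n"
    and kernel_normalized: "\<And>m. m \<in> space M \<Longrightarrow> (\<integral>\<^sup>+ n. ennreal (k m n) \<partial>N) = 1"
begin

lemma measurable_kernel[measurable (raw)]:
  "f \<in> measurable L M \<Longrightarrow> g \<in> measurable L N \<Longrightarrow> (\<lambda>x. k (f x) (g x)) \<in> borel_measurable L"
  using measurable_compose[OF measurable_Pair kernel_measurable] by simp

definition expect_next :: "('n \<Rightarrow> ennreal) \<Rightarrow> 'm \<Rightarrow> ennreal" where
  "expect_next h m = (\<integral>\<^sup>+ n. ennreal (k m n) * h n \<partial>N)"

text \<open>Where the integral is infinite, \<open>enn2real\<close> returns the junk value 0; for densities \<open>u\<close> of
  finite mass this happens only on a null set (\<open>AE_next_density\<close>).\<close>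

definition next_density :: "('m \<Rightarrow> real) \<Rightarrow> 'n \<Rightarrow> real" where
  "next_density u n = enn2real (\<integral>\<^sup>+ m. ennreal (u m * k m n) \<partial>M)"

lemma measurable_expect_next[measurable]:
  assumes [measurable]: "h \<in> borel_measurable N"
  shows "expect_next h \<in> borel_measurable M"
  unfolding expect_next_def by measurable

lemma measurable_next_density[measurable]:
  assumes [measurable]: "u \<in> borel_measurable M"
  shows "next_density u \<in> borel_measurable N"
  unfolding next_density_def by measurable

lemma next_density_nonneg: "0 \<le> next_density u n"
  by (simp add: next_density_def)

lemma expect_next_one: "m \<in> space M \<Longrightarrow> expect_next (\<lambda>_. 1) m = 1"
  by (simp add: expect_next_def kernel_normalized)

lemma nn_integral_cmult_kernel:
  "m \<in> space M \<Longrightarrow> 0 \<le> c \<Longrightarrow> (\<integral>\<^sup>+ n. ennreal (c * k m n) \<partial>N) = ennreal c"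
  using kernel_nonneg by (simp add: ennreal_mult nn_integral_cmult kernel_normalized)

lemma nn_integral_kernel_Tonelli:
  assumes [measurable]: "u \<in> borel_measurable M" "h \<in> borel_measurable N" and u_nonneg: "\<And>m. 0 \<le> u m"
  shows "(\<integral>\<^sup>+ n. (\<integral>\<^sup>+ m. ennreal (u m * k m n) \<partial>M) * h n \<partial>N) = (\<integral>\<^sup>+ m. ennreal (u m) * expect_next h m \<partial>M)"
proof -
  have "(\<integral>\<^sup>+ n. (\<integral>\<^sup>+ m. ennreal (u m * k m n) \<partial>M) * h n \<partial>N) =
      (\<integral>\<^sup>+ n. \<integral>\<^sup>+ m. ennreal (u m * k m n) * h n \<partial>M \<partial>N)"
    by (intro nn_integral_cong nn_integral_multc[symmetric]) measurable
  also have "\<dots> = (\<integral>\<^sup>+ m. \<integral>\<^sup>+ n. ennreal (u m * k m n) * h n \<partial>N \<partial>M)"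
    by (rule Fubini') measurable
  also have "\<dots> = (\<integral>\<^sup>+ m. ennreal (u m) * expect_next h m \<partial>M)"
  proof (intro nn_integral_cong)
    fix m assume "m \<in> space M"
    then have "ennreal (u m) * expect_next h m = (\<integral>\<^sup>+ n. ennreal (u m) * (ennreal (k m n) * h n) \<partial>N)"
      unfolding expect_next_def by (intro nn_integral_cmult[symmetric]) measurable
    then show "(\<integral>\<^sup>+ n. ennreal (u m * k m n) * h n \<partial>N) = ennreal (u m) * expect_next h m"
      using u_nonneg kernel_nonneg by (simp add: ennreal_mult mult.assoc)
  qed
  finally show ?thesis .
qed

context
  fixes u :: "'m \<Rightarrow> real"
  assumes u_measurable[measurable]: "u \<in> borel_measurable M" and u_nonneg: "\<And>m. 0 \<le> u m"
    and u_finite: "(\<integral>\<^sup>+ m. ennreal (u m) \<partial>M) \<noteq> \<infinity>"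
begin

lemma AE_next_density: "AE n in N. ennreal (next_density u n) = (\<integral>\<^sup>+ m. ennreal (u m * k m n) \<partial>M)"
proof -
  have "(\<integral>\<^sup>+ n. (\<integral>\<^sup>+ m. ennreal (u m * k m n) \<partial>M) \<partial>N) = (\<integral>\<^sup>+ m. ennreal (u m) \<partial>M)"
    using nn_integral_kernel_Tonelli[of u "\<lambda>_. 1"] u_nonneg
    by (simp add: expect_next_one cong: nn_integral_cong)
  then have "AE n in N. (\<integral>\<^sup>+ m. ennreal (u m * k m n) \<partial>M) \<noteq> \<infinity>"
    using u_finite by (intro nn_integral_PInf_AE) auto
  then show ?thesis
    by eventually_elim (simp add: next_density_def less_top)
qed

lemma nn_integral_next_density_mult:
  assumes [measurable]: "h \<in> borel_measurable N"
  shows "(\<integral>\<^sup>+ n. ennreal (next_density u n) * h n \<partial>N) = (\<integral>\<^sup>+ m. ennreal (u m) * expect_next h m \<partial>M)"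
  using AE_next_density
  by (subst nn_integral_kernel_Tonelli[symmetric, OF u_measurable assms u_nonneg])
    (auto intro!: nn_integral_cong_AE elim: eventually_mono)

lemma nn_integral_next_density: "(\<integral>\<^sup>+ n. ennreal (next_density u n) \<partial>N) = (\<integral>\<^sup>+ m. ennreal (u m) \<partial>M)"
  using nn_integral_next_density_mult[of "\<lambda>_. 1"]
  by (simp add: expect_next_one cong: nn_integral_cong)

end

end

text \<open>Conditional Jensen: pushing a density ratio through a kernel does not increase its second
  moment.\<close>

locale kernel_density_ratio = transition_kernel M N k
  for M :: "'m measure" and N :: "'n measure" and k +
  fixes ub us w :: "'m \<Rightarrow> real"
  assumes ratio_measurable[measurable]:
      "ub \<in> borel_measurable M" "us \<in> borel_measurable M" "w \<in> borel_measurable M"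
    and ratio_nonneg: "\<And>m. 0 \<le> ub m" "\<And>m. 0 \<le> us m" "\<And>m. 0 \<le> w m"
    and ratio_finite: "(\<integral>\<^sup>+ m. ennreal (ub m) \<partial>M) \<noteq> \<infinity>" "(\<integral>\<^sup>+ m. ennreal (us m) \<partial>M) \<noteq> \<infinity>"
    and density_ratio: "AE m in M. ub m * w m = us m"
begin

lemma next_density_us_eq: "(\<integral>\<^sup>+ m. ennreal (us m * k m n) \<partial>M) = (\<integral>\<^sup>+ m. ennreal (ub m * k m n * w m) \<partial>M)"
  using density_ratio by (intro nn_integral_cong_AE) (auto elim!: eventually_mono intro: arg_cong[where f = ennreal])

lemma AE_next_density_ratio:
  "AE n in N. next_density ub n * (next_density us n / next_density ub n) = next_density us n"
  using AE_next_density[OF ratio_measurable(1) ratio_nonneg(1) ratio_finite(1)] AE_space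
proof eventually_elim
  case (elim n)
  show ?case
  proof (cases "next_density ub n = 0")
    case True
    \<comment> \<open>here the ratio is the junk value \<open>x / 0 = 0\<close>, so the density of \<open>us\<close> must vanish too\<close>
    have [measurable]: "(\<lambda>m. k m n) \<in> borel_measurable M"
      using elim by measurable
    have "AE m in M. ennreal (ub m * k m n) = 0"
      using True elim by (simp add: nn_integral_0_iff_AE)
    then have "(\<integral>\<^sup>+ m. ennreal (us m * k m n) \<partial>M) = 0"
      unfolding next_density_us_eq using ratio_nonneg kernel_nonneg
      by (subst nn_integral_0_iff_AE) (auto elim!: eventually_mono intro: mult_nonpos_nonneg simp: ennreal_eq_0_iff)
    then show ?thesis
      using True by (simp add: next_density_def)
  qed simp
qed

lemma AE_next_density_ratio_square_le:
  "AE n in N. ennreal (next_density ub n * (next_density us n / next_density ub n)\<^sup>2) \<le>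
    (\<integral>\<^sup>+ m. ennreal (ub m * (w m)\<^sup>2 * k m n) \<partial>M)"
  using AE_next_density[OF ratio_measurable(1) ratio_nonneg(1) ratio_finite(1)]
    AE_next_density[OF ratio_measurable(2) ratio_nonneg(2) ratio_finite(2)] AE_space
proof eventually_elim
  case (elim n)
  have [measurable]: "(\<lambda>m. k m n) \<in> borel_measurable M"
    using elim by measurable
  have "ennreal (next_density ub n * (next_density us n / next_density ub n)\<^sup>2) \<le>
      (\<integral>\<^sup>+ m. ennreal (ub m * k m n * (w m)\<^sup>2) \<partial>M)"
    using elim ratio_nonneg kernel_nonneg
    by (intro nn_integral_weighted_ratio_square_le) (auto simp: next_density_us_eq next_density_nonneg)
  then show ?case
    by (simp add: ac_simps)
qed

lemma nn_integral_next_density_ratio_square_le: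
  assumes [measurable]: "h \<in> borel_measurable N"
  shows "(\<integral>\<^sup>+ n. ennreal (next_density ub n) * ennreal ((next_density us n / next_density ub n)\<^sup>2) * h n \<partial>N)
    \<le> (\<integral>\<^sup>+ m. ennreal (ub m) * ennreal ((w m)\<^sup>2) * expect_next h m \<partial>M)"
proof -
  have "(\<integral>\<^sup>+ n. ennreal (next_density ub n) * ennreal ((next_density us n / next_density ub n)\<^sup>2) * h n \<partial>N)
      \<le> (\<integral>\<^sup>+ n. (\<integral>\<^sup>+ m. ennreal (ub m * (w m)\<^sup>2 * k m n) \<partial>M) * h n \<partial>N)"
    using AE_next_density_ratio_square_le
    by (intro nn_integral_mono_AE) (auto elim!: eventually_mono intro!: mult_right_mono
        simp: ennreal_mult'[symmetric] next_density_nonneg)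
  also have "\<dots> = (\<integral>\<^sup>+ m. ennreal (ub m * (w m)\<^sup>2) * expect_next h m \<partial>M)"
    using ratio_nonneg by (intro nn_integral_kernel_Tonelli) auto
  finally show ?thesis
    using ratio_nonneg by (simp add: ennreal_mult)
qed

end

section \<open>The embedding chain\<close>

locale embedding_chain =
  fixes MX :: "'x measure" and MA :: "'a measure" and MR1 :: "'r measure" and MR2 :: "'s measure"
    and px :: "'x \<Rightarrow> real" and q1 :: "'x \<Rightarrow> 'a \<Rightarrow> 'r \<Rightarrow> real" and q2 :: "'r \<Rightarrow> 's \<Rightarrow> real"
    and qy :: "'s \<Rightarrow> real \<Rightarrow> real"
  assumes sigma_finite_X: "sigma_finite_measure MX" and sigma_finite_A: "sigma_finite_measure MA"
    and sigma_finite_R1: "sigma_finite_measure MR1" and sigma_finite_R2: "sigma_finite_measure MR2"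
    and px_measurable: "px \<in> borel_measurable MX"
    and q1_measurable: "(\<lambda>(x, a, r). q1 x a r) \<in> borel_measurable (MX \<Otimes>\<^sub>M MA \<Otimes>\<^sub>M MR1)"
    and q2_measurable: "(\<lambda>(r, s). q2 r s) \<in> borel_measurable (MR1 \<Otimes>\<^sub>M MR2)"
    and qy_measurable: "(\<lambda>(s, y). qy s y) \<in> borel_measurable (MR2 \<Otimes>\<^sub>M lborel)"
    and px_nonneg: "\<And>x. 0 \<le> px x" and q1_nonneg: "\<And>x a r. 0 \<le> q1 x a r"
    and q2_nonneg: "\<And>r s. 0 \<le> q2 r s" and qy_nonneg: "\<And>s y. 0 \<le> qy s y"
    and px_normalized: "(\<integral>\<^sup>+ x. ennreal (px x) \<partial>MX) = 1"
    and q1_normalized: "\<And>x a. x \<in> space MX \<Longrightarrow> a \<in> space MA \<Longrightarrow> (\<integral>\<^sup>+ r. ennreal (q1 x a r) \<partial>MR1) = 1"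
    and q2_normalized: "\<And>r. r \<in> space MR1 \<Longrightarrow> (\<integral>\<^sup>+ s. ennreal (q2 r s) \<partial>MR2) = 1"
    and qy_normalized: "\<And>s. s \<in> space MR2 \<Longrightarrow> (\<integral>\<^sup>+ y. ennreal (qy s y) \<partial>lborel) = 1"
begin

lemma measurable_px[measurable (raw)]: "f \<in> measurable L MX \<Longrightarrow> (\<lambda>x. px (f x)) \<in> borel_measurable L"
  using measurable_compose px_measurable by blast

lemma measurable_q1[measurable (raw)]:
  "f \<in> measurable L MX \<Longrightarrow> g \<in> measurable L MA \<Longrightarrow> h \<in> measurable L MR1 \<Longrightarrow>
    (\<lambda>x. q1 (f x) (g x) (h x)) \<in> borel_measurable L"
  using measurable_compose[OF measurable_Pair[OF _ measurable_Pair] q1_measurable] by simp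

lemma measurable_q2[measurable (raw)]:
  "f \<in> measurable L MR1 \<Longrightarrow> g \<in> measurable L MR2 \<Longrightarrow> (\<lambda>x. q2 (f x) (g x)) \<in> borel_measurable L"
  using measurable_compose[OF measurable_Pair q2_measurable] by simp

lemma measurable_qy[measurable (raw)]:
  "f \<in> measurable L MR2 \<Longrightarrow> g \<in> borel_measurable L \<Longrightarrow> (\<lambda>x. qy (f x) (g x)) \<in> borel_measurable L"
  using measurable_compose[OF measurable_Pair qy_measurable, of f L g] by simp

sublocale K1: transition_kernel "MX \<Otimes>\<^sub>M MA" MR1 "\<lambda>xa r. q1 (fst xa) (snd xa) r"
proof (intro transition_kernel.intro transition_kernel_axioms.intro pair_sigma_finite.intro)
  show "(\<lambda>(xa, r). q1 (fst xa) (snd xa) r) \<in> borel_measurable ((MX \<Otimes>\<^sub>M MA) \<Otimes>\<^sub>M MR1)"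
    by measurable
qed (simp_all add: sigma_finite_pair_measure sigma_finite_X sigma_finite_A sigma_finite_R1
    q1_nonneg q1_normalized space_pair_measure mem_Times_iff)

sublocale K2: transition_kernel MR1 MR2 q2
  by (intro transition_kernel.intro transition_kernel_axioms.intro pair_sigma_finite.intro)
    (simp_all add: sigma_finite_R1 sigma_finite_R2 q2_measurable q2_nonneg q2_normalized)

sublocale K3: transition_kernel MR2 lborel qy
  by (intro transition_kernel.intro transition_kernel_axioms.intro pair_sigma_finite.intro)
    (simp_all add: sigma_finite_R2 lborel.sigma_finite_measure_axioms qy_measurable qy_nonneg qy_normalized)

definition policy :: "('x \<Rightarrow> 'a \<Rightarrow> real) \<Rightarrow> bool" where
  "policy pol \<longleftrightarrow> (\<lambda>(x, a). pol x a) \<in> borel_measurable (MX \<Otimes>\<^sub>M MA) \<and> (\<forall>x a. 0 \<le> pol x a) \<and>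
    (\<forall>x\<in>space MX. (\<integral>\<^sup>+ a. ennreal (pol x a) \<partial>MA) = 1)"

definition dens_XA :: "('x \<Rightarrow> 'a \<Rightarrow> real) \<Rightarrow> 'x \<times> 'a \<Rightarrow> real" where
  "dens_XA pol xa = px (fst xa) * pol (fst xa) (snd xa)"

definition dens_R1 :: "('x \<Rightarrow> 'a \<Rightarrow> real) \<Rightarrow> 'r \<Rightarrow> real" where
  "dens_R1 pol = K1.next_density (dens_XA pol)"

definition dens_R2 :: "('x \<Rightarrow> 'a \<Rightarrow> real) \<Rightarrow> 's \<Rightarrow> real" where
  "dens_R2 pol = K2.next_density (dens_R1 pol)"

definition dens_Y :: "('x \<Rightarrow> 'a \<Rightarrow> real) \<Rightarrow> real \<Rightarrow> real" where
  "dens_Y pol = K3.next_density (dens_R2 pol)"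

text \<open>\<open>cond_Z f z\<close> is the conditional expectation of \<open>f Y\<close> given \<open>Z = z\<close>.\<close>

definition cond_R2 :: "(real \<Rightarrow> ennreal) \<Rightarrow> 's \<Rightarrow> ennreal" where
  "cond_R2 f = K3.expect_next f"

definition cond_R1 :: "(real \<Rightarrow> ennreal) \<Rightarrow> 'r \<Rightarrow> ennreal" where
  "cond_R1 f = K2.expect_next (cond_R2 f)"

definition cond_XA :: "(real \<Rightarrow> ennreal) \<Rightarrow> 'x \<times> 'a \<Rightarrow> ennreal" where
  "cond_XA f = K1.expect_next (cond_R1 f)"

lemma measurable_cond_R2[measurable]: "f \<in> borel_measurable borel \<Longrightarrow> cond_R2 f \<in> borel_measurable MR2"
  unfolding cond_R2_def by measurable

lemma measurable_cond_R1[measurable]: "f \<in> borel_measurable borel \<Longrightarrow> cond_R1 f \<in> borel_measurable MR1"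
  unfolding cond_R1_def by measurable

lemma measurable_cond_XA[measurable]: "f \<in> borel_measurable borel \<Longrightarrow> cond_XA f \<in> borel_measurable (MX \<Otimes>\<^sub>M MA)"
  unfolding cond_XA_def by measurable

lemma nn_integral_jmeas_cong:
  assumes "\<And>x a r s y. x \<in> space MX \<Longrightarrow> a \<in> space MA \<Longrightarrow> r \<in> space MR1 \<Longrightarrow> s \<in> space MR2 \<Longrightarrow>
    G (x, a, r, s, y) = H (x, a, r, s, y)"
  shows "(\<integral>\<^sup>+ \<omega>. G \<omega> \<partial>jmeas MX MA MR1 MR2 px pol q1 q2 qy) = (\<integral>\<^sup>+ \<omega>. H \<omega> \<partial>jmeas MX MA MR1 MR2 px pol q1 q2 qy)"
  using assms by (intro nn_integral_cong) (auto simp: jmeas_def space_pair_measure)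

lemma measurable_yof[measurable]: "yof \<in> borel_measurable (MX \<Otimes>\<^sub>M MA \<Otimes>\<^sub>M MR1 \<Otimes>\<^sub>M MR2 \<Otimes>\<^sub>M lborel)"
  unfolding yof_def by measurable

context
  fixes pol :: "'x \<Rightarrow> 'a \<Rightarrow> real"
  assumes pol: "policy pol"
begin

lemma measurable_policy[measurable (raw)]:
  "f \<in> measurable L MX \<Longrightarrow> g \<in> measurable L MA \<Longrightarrow> (\<lambda>x. pol (f x) (g x)) \<in> borel_measurable L"
  using measurable_compose[OF measurable_Pair, of f L MX g MA "\<lambda>(x, a). pol x a"] pol
  by (auto simp: policy_def)

lemma policy_nonneg: "0 \<le> pol x a"
  using pol by (simp add: policy_def)

lemma measurable_dens_XA[measurable]: "dens_XA pol \<in> borel_measurable (MX \<Otimes>\<^sub>M MA)"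
  unfolding dens_XA_def by measurable

lemma dens_XA_nonneg: "0 \<le> dens_XA pol xa"
  by (simp add: dens_XA_def px_nonneg policy_nonneg)

lemma nn_integral_dens_XA: "(\<integral>\<^sup>+ xa. ennreal (dens_XA pol xa) \<partial>(MX \<Otimes>\<^sub>M MA)) = 1"
proof -
  have "(\<integral>\<^sup>+ xa. ennreal (dens_XA pol xa) \<partial>(MX \<Otimes>\<^sub>M MA)) = (\<integral>\<^sup>+ x. \<integral>\<^sup>+ a. ennreal (px x) * ennreal (pol x a) \<partial>MA \<partial>MX)"
    by (subst sigma_finite_measure.nn_integral_fst[OF sigma_finite_A, symmetric])
      (simp_all add: dens_XA_def ennreal_mult px_nonneg policy_nonneg)
  also have "\<dots> = (\<integral>\<^sup>+ x. ennreal (px x) * (\<integral>\<^sup>+ a. ennreal (pol x a) \<partial>MA) \<partial>MX)"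
    by (intro nn_integral_cong nn_integral_cmult) measurable
  also have "\<dots> = 1"
    using pol px_normalized by (simp add: policy_def cong: nn_integral_cong)
  finally show ?thesis .
qed

lemma measurable_dens_R1[measurable]: "dens_R1 pol \<in> borel_measurable MR1"
  unfolding dens_R1_def by measurable

lemma dens_R1_nonneg: "0 \<le> dens_R1 pol r"
  by (simp add: dens_R1_def K1.next_density_nonneg)

lemma nn_integral_dens_R1_mult:
  "h \<in> borel_measurable MR1 \<Longrightarrow> (\<integral>\<^sup>+ r. ennreal (dens_R1 pol r) * h r \<partial>MR1) =
    (\<integral>\<^sup>+ xa. ennreal (dens_XA pol xa) * K1.expect_next h xa \<partial>(MX \<Otimes>\<^sub>M MA))"
  unfolding dens_R1_def
  by (rule K1.nn_integral_next_density_mult) (simp_all add: dens_XA_nonneg nn_integral_dens_XA)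

lemma nn_integral_dens_R1: "(\<integral>\<^sup>+ r. ennreal (dens_R1 pol r) \<partial>MR1) = 1"
  unfolding dens_R1_def
  by (subst K1.nn_integral_next_density) (simp_all add: dens_XA_nonneg nn_integral_dens_XA)

lemma measurable_dens_R2[measurable]: "dens_R2 pol \<in> borel_measurable MR2"
  unfolding dens_R2_def by measurable

lemma dens_R2_nonneg: "0 \<le> dens_R2 pol s"
  by (simp add: dens_R2_def K2.next_density_nonneg)

lemma nn_integral_dens_R2_mult:
  "h \<in> borel_measurable MR2 \<Longrightarrow> (\<integral>\<^sup>+ s. ennreal (dens_R2 pol s) * h s \<partial>MR2) =
    (\<integral>\<^sup>+ r. ennreal (dens_R1 pol r) * K2.expect_next h r \<partial>MR1)"
  unfolding dens_R2_def
  by (rule K2.nn_integral_next_density_mult) (simp_all add: dens_R1_nonneg nn_integral_dens_R1)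

lemma nn_integral_dens_R2: "(\<integral>\<^sup>+ s. ennreal (dens_R2 pol s) \<partial>MR2) = 1"
  unfolding dens_R2_def
  by (subst K2.nn_integral_next_density) (simp_all add: dens_R1_nonneg nn_integral_dens_R1)

lemma measurable_dens_Y[measurable]: "dens_Y pol \<in> borel_measurable lborel"
  unfolding dens_Y_def by measurable

lemma dens_Y_nonneg: "0 \<le> dens_Y pol y"
  by (simp add: dens_Y_def K3.next_density_nonneg)

lemma nn_integral_dens_Y_mult:
  "h \<in> borel_measurable lborel \<Longrightarrow> (\<integral>\<^sup>+ y. ennreal (dens_Y pol y) * h y \<partial>lborel) =
    (\<integral>\<^sup>+ s. ennreal (dens_R2 pol s) * K3.expect_next h s \<partial>MR2)"
  unfolding dens_Y_def
  by (rule K3.nn_integral_next_density_mult) (simp_all add: dens_R2_nonneg nn_integral_dens_R2)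

lemma nn_integral_dens_Y: "(\<integral>\<^sup>+ y. ennreal (dens_Y pol y) \<partial>lborel) = 1"
  unfolding dens_Y_def
  by (subst K3.nn_integral_next_density) (simp_all add: dens_R2_nonneg nn_integral_dens_R2)

lemma nn_integral_jmeas_product:
  assumes [measurable]: "c \<in> borel_measurable (MX \<Otimes>\<^sub>M MA)" "d \<in> borel_measurable MR1"
    "e \<in> borel_measurable MR2" "f \<in> borel_measurable borel"
  shows "(\<integral>\<^sup>+ (x, a, r, s, y). c (x, a) * d r * e s * f y \<partial>jmeas MX MA MR1 MR2 px pol q1 q2 qy) =
    (\<integral>\<^sup>+ xa. ennreal (dens_XA pol xa) * c xa *
        K1.expect_next (\<lambda>r. d r * K2.expect_next (\<lambda>s. e s * K3.expect_next f s) r) xa \<partial>(MX \<Otimes>\<^sub>M MA))"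
proof -
  let ?\<Omega> = "MX \<Otimes>\<^sub>M MA \<Otimes>\<^sub>M MR1 \<Otimes>\<^sub>M MR2 \<Otimes>\<^sub>M lborel"
  have Y: "(\<integral>\<^sup>+ y. ennreal (px x * pol x a * q1 x a r * q2 r s * qy s y) * (c (x, a) * d r * e s * f y) \<partial>lborel)
      = ennreal (px x * pol x a * q1 x a r * q2 r s) * (c (x, a) * d r * (e s * K3.expect_next f s))"
    if "s \<in> space MR2" for x a r s
    using that unfolding K3.expect_next_def
    by (subst nn_integral_cmult_factor) (measurable, auto simp: px_nonneg policy_nonneg q1_nonneg q2_nonneg
        qy_nonneg mult.assoc)
  have R2: "(\<integral>\<^sup>+ s. ennreal (px x * pol x a * q1 x a r * q2 r s) * (c (x, a) * d r * (e s * K3.expect_next f s)) \<partial>MR2)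
      = ennreal (px x * pol x a * q1 x a r) * (c (x, a) * (d r * K2.expect_next (\<lambda>s. e s * K3.expect_next f s) r))"
    if "r \<in> space MR1" for x a r
    using that unfolding K2.expect_next_def
    by (subst nn_integral_cmult_factor) (measurable, auto simp: px_nonneg policy_nonneg q1_nonneg q2_nonneg
        mult.assoc)
  have R1: "(\<integral>\<^sup>+ r. ennreal (px x * pol x a * q1 x a r) *
        (c (x, a) * (d r * K2.expect_next (\<lambda>s. e s * K3.expect_next f s) r)) \<partial>MR1)
      = ennreal (dens_XA pol (x, a)) * c (x, a) *
        K1.expect_next (\<lambda>r. d r * K2.expect_next (\<lambda>s. e s * K3.expect_next f s) r) (x, a)"
    if "x \<in> space MX" "a \<in> space MA" for x a
    using that unfolding K1.expect_next_def dens_XA_def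
    by (subst nn_integral_cmult_factor) (measurable, auto simp: px_nonneg policy_nonneg q1_nonneg)
  have "(\<integral>\<^sup>+ (x, a, r, s, y). c (x, a) * d r * e s * f y \<partial>jmeas MX MA MR1 MR2 px pol q1 q2 qy) =
      (\<integral>\<^sup>+ \<omega>. ennreal (jdens px pol q1 q2 qy \<omega>) * (case \<omega> of (x, a, r, s, y) \<Rightarrow> c (x, a) * d r * e s * f y) \<partial>?\<Omega>)"
    unfolding jmeas_def by (rule nn_integral_density) (simp_all add: jdens_def)
  also have "\<dots> = (\<integral>\<^sup>+ x. \<integral>\<^sup>+ a. \<integral>\<^sup>+ r. \<integral>\<^sup>+ s. \<integral>\<^sup>+ y. ennreal (px x * pol x a * q1 x a r * q2 r s * qy s y) *
      (c (x, a) * d r * e s * f y) \<partial>lborel \<partial>MR2 \<partial>MR1 \<partial>MA \<partial>MX)"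
    by (subst nn_integral_iterated5[OF sigma_finite_A sigma_finite_R1 sigma_finite_R2
          lborel.sigma_finite_measure_axioms]) (simp_all add: jdens_def)
  also have "\<dots> = (\<integral>\<^sup>+ x. \<integral>\<^sup>+ a. ennreal (dens_XA pol (x, a)) * c (x, a) *
      K1.expect_next (\<lambda>r. d r * K2.expect_next (\<lambda>s. e s * K3.expect_next f s) r) (x, a) \<partial>MA \<partial>MX)"
    by (simp only: Y R2 R1 cong: nn_integral_cong)
  also have "\<dots> = (\<integral>\<^sup>+ xa. ennreal (dens_XA pol xa) * c xa *
      K1.expect_next (\<lambda>r. d r * K2.expect_next (\<lambda>s. e s * K3.expect_next f s) r) xa \<partial>(MX \<Otimes>\<^sub>M MA))"
    by (subst sigma_finite_measure.nn_integral_fst[OF sigma_finite_A]) simp_all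
  finally show ?thesis .
qed

lemma nn_integral_jmeas_XA:
  assumes [measurable]: "c \<in> borel_measurable (MX \<Otimes>\<^sub>M MA)" "f \<in> borel_measurable borel"
  shows "(\<integral>\<^sup>+ (x, a, r, s, y). c (x, a) * f y \<partial>jmeas MX MA MR1 MR2 px pol q1 q2 qy) =
    (\<integral>\<^sup>+ xa. ennreal (dens_XA pol xa) * c xa * cond_XA f xa \<partial>(MX \<Otimes>\<^sub>M MA))"
proof -
  have "(\<integral>\<^sup>+ (x, a, r, s, y). c (x, a) * 1 * 1 * f y \<partial>jmeas MX MA MR1 MR2 px pol q1 q2 qy) =
    (\<integral>\<^sup>+ xa. ennreal (dens_XA pol xa) * c xa *
        K1.expect_next (\<lambda>r. 1 * K2.expect_next (\<lambda>s. 1 * K3.expect_next f s) r) xa \<partial>(MX \<Otimes>\<^sub>M MA))"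
    by (rule nn_integral_jmeas_product) measurable
  then show ?thesis
    by (simp add: cond_XA_def cond_R1_def cond_R2_def)
qed

lemma nn_integral_jmeas_R1:
  assumes [measurable]: "d \<in> borel_measurable MR1" "f \<in> borel_measurable borel"
  shows "(\<integral>\<^sup>+ (x, a, r, s, y). d r * f y \<partial>jmeas MX MA MR1 MR2 px pol q1 q2 qy) =
    (\<integral>\<^sup>+ r. ennreal (dens_R1 pol r) * d r * cond_R1 f r \<partial>MR1)"
proof -
  have "(\<integral>\<^sup>+ (x, a, r, s, y). 1 * d r * 1 * f y \<partial>jmeas MX MA MR1 MR2 px pol q1 q2 qy) =
    (\<integral>\<^sup>+ xa. ennreal (dens_XA pol xa) * 1 *
        K1.expect_next (\<lambda>r. d r * K2.expect_next (\<lambda>s. 1 * K3.expect_next f s) r) xa \<partial>(MX \<Otimes>\<^sub>M MA))"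
    by (rule nn_integral_jmeas_product) measurable
  also have "\<dots> = (\<integral>\<^sup>+ r. ennreal (dens_R1 pol r) * (d r * cond_R1 f r) \<partial>MR1)"
    by (subst nn_integral_dens_R1_mult) (simp_all add: cond_R1_def cond_R2_def)
  finally show ?thesis
    by (simp add: mult.assoc)
qed

lemma nn_integral_jmeas_R2:
  assumes [measurable]: "e \<in> borel_measurable MR2" "f \<in> borel_measurable borel"
  shows "(\<integral>\<^sup>+ (x, a, r, s, y). e s * f y \<partial>jmeas MX MA MR1 MR2 px pol q1 q2 qy) =
    (\<integral>\<^sup>+ s. ennreal (dens_R2 pol s) * e s * cond_R2 f s \<partial>MR2)"
proof -
  have "(\<integral>\<^sup>+ (x, a, r, s, y). 1 * 1 * e s * f y \<partial>jmeas MX MA MR1 MR2 px pol q1 q2 qy) =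
    (\<integral>\<^sup>+ xa. ennreal (dens_XA pol xa) * 1 *
        K1.expect_next (\<lambda>r. 1 * K2.expect_next (\<lambda>s. e s * K3.expect_next f s) r) xa \<partial>(MX \<Otimes>\<^sub>M MA))"
    by (rule nn_integral_jmeas_product) measurable
  also have "\<dots> = (\<integral>\<^sup>+ r. ennreal (dens_R1 pol r) * K2.expect_next (\<lambda>s. e s * cond_R2 f s) r \<partial>MR1)"
    by (subst nn_integral_dens_R1_mult) (simp_all add: cond_R2_def)
  also have "\<dots> = (\<integral>\<^sup>+ s. ennreal (dens_R2 pol s) * (e s * cond_R2 f s) \<partial>MR2)"
    by (subst nn_integral_dens_R2_mult) simp_all
  finally show ?thesis
    by (simp add: mult.assoc)
qed

lemma nn_integral_jmeas_Y:
  assumes [measurable]: "f \<in> borel_measurable borel"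
  shows "(\<integral>\<^sup>+ (x, a, r, s, y). f y \<partial>jmeas MX MA MR1 MR2 px pol q1 q2 qy) =
    (\<integral>\<^sup>+ y. ennreal (dens_Y pol y) * f y \<partial>lborel)"
proof -
  have "(\<integral>\<^sup>+ (x, a, r, s, y). 1 * f y \<partial>jmeas MX MA MR1 MR2 px pol q1 q2 qy) =
      (\<integral>\<^sup>+ s. ennreal (dens_R2 pol s) * 1 * cond_R2 f s \<partial>MR2)"
    by (rule nn_integral_jmeas_R2) measurable
  also have "\<dots> = (\<integral>\<^sup>+ y. ennreal (dens_Y pol y) * f y \<partial>lborel)"
    by (subst nn_integral_dens_Y_mult) (simp_all add: cond_R2_def)
  finally show ?thesis
    by simp
qed

lemma prob_space_jmeas: "prob_space (jmeas MX MA MR1 MR2 px pol q1 q2 qy)"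
proof
  have "(\<integral>\<^sup>+ (x, a, r, s, y). 1 \<partial>jmeas MX MA MR1 MR2 px pol q1 q2 qy) = 1"
    using nn_integral_jmeas_Y[of "\<lambda>_. 1"] nn_integral_dens_Y by simp
  then show "emeasure (jmeas MX MA MR1 MR2 px pol q1 q2 qy) (space (jmeas MX MA MR1 MR2 px pol q1 q2 qy)) = 1"
    by (simp add: case_prod_beta')
qed

lemma nn_integral_dens_R1_iterated:
  assumes [measurable]: "h \<in> borel_measurable MR1"
  shows "(\<integral>\<^sup>+ r. ennreal (dens_R1 pol r) * h r \<partial>MR1) =
    (\<integral>\<^sup>+ x. \<integral>\<^sup>+ a. \<integral>\<^sup>+ r. ennreal (px x * pol x a * q1 x a r) * h r \<partial>MR1 \<partial>MA \<partial>MX)"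
proof -
  have "(\<integral>\<^sup>+ r. ennreal (dens_R1 pol r) * h r \<partial>MR1) =
      (\<integral>\<^sup>+ xa. ennreal (dens_XA pol xa) * K1.expect_next h xa \<partial>(MX \<Otimes>\<^sub>M MA))"
    by (rule nn_integral_dens_R1_mult) measurable
  also have "\<dots> = (\<integral>\<^sup>+ x. \<integral>\<^sup>+ a. ennreal (dens_XA pol (x, a)) * K1.expect_next h (x, a) \<partial>MA \<partial>MX)"
    by (rule sigma_finite_measure.nn_integral_fst[OF sigma_finite_A, symmetric]) measurable
  also have "\<dots> = (\<integral>\<^sup>+ x. \<integral>\<^sup>+ a. \<integral>\<^sup>+ r. ennreal (px x * pol x a * q1 x a r) * h r \<partial>MR1 \<partial>MA \<partial>MX)"
    unfolding K1.expect_next_def dens_XA_def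
    by (intro nn_integral_cong, subst nn_integral_cmult[symmetric])
      (measurable, simp add: ennreal_mult px_nonneg policy_nonneg q1_nonneg mult.assoc)
  finally show ?thesis .
qed

lemma nn_integral_dens_R2_iterated:
  assumes [measurable]: "h \<in> borel_measurable MR2"
  shows "(\<integral>\<^sup>+ s. ennreal (dens_R2 pol s) * h s \<partial>MR2) =
    (\<integral>\<^sup>+ x. \<integral>\<^sup>+ a. \<integral>\<^sup>+ r. \<integral>\<^sup>+ s. ennreal (px x * pol x a * q1 x a r * q2 r s) * h s \<partial>MR2 \<partial>MR1 \<partial>MA \<partial>MX)"
proof -
  have "(\<integral>\<^sup>+ s. ennreal (dens_R2 pol s) * h s \<partial>MR2) =
      (\<integral>\<^sup>+ x. \<integral>\<^sup>+ a. \<integral>\<^sup>+ r. ennreal (px x * pol x a * q1 x a r) * K2.expect_next h r \<partial>MR1 \<partial>MA \<partial>MX)"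
    by (simp add: nn_integral_dens_R2_mult nn_integral_dens_R1_iterated)
  also have "\<dots> = (\<integral>\<^sup>+ x. \<integral>\<^sup>+ a. \<integral>\<^sup>+ r. \<integral>\<^sup>+ s. ennreal (px x * pol x a * q1 x a r * q2 r s) * h s \<partial>MR2 \<partial>MR1 \<partial>MA \<partial>MX)"
    unfolding K2.expect_next_def
    by (intro nn_integral_cong, subst nn_integral_cmult[symmetric])
      (measurable, simp add: ennreal_mult px_nonneg policy_nonneg q1_nonneg q2_nonneg mult.assoc)
  finally show ?thesis .
qed

lemma marg_r1_eq:
  assumes r: "r \<in> space MR1"
  shows "marg_r1 MX MA MR2 px pol q1 q2 qy r = dens_R1 pol r"
proof -
  let ?j = "\<lambda>(x, a, s, y). jdens px pol q1 q2 qy (x, a, r, s, y)"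
  have [measurable]: "?j \<in> borel_measurable (MX \<Otimes>\<^sub>M MA \<Otimes>\<^sub>M MR2 \<Otimes>\<^sub>M lborel)"
    using r unfolding jdens_def by measurable
  have "marg_r1 MX MA MR2 px pol q1 q2 qy r = enn2real (\<integral>\<^sup>+ p. ennreal (?j p) \<partial>(MX \<Otimes>\<^sub>M MA \<Otimes>\<^sub>M MR2 \<Otimes>\<^sub>M lborel))"
    unfolding marg_r1_def
    by (rule integral_eq_nn_integral) (measurable, auto simp: jdens_def px_nonneg policy_nonneg q1_nonneg q2_nonneg qy_nonneg)
  also have "(\<integral>\<^sup>+ p. ennreal (?j p) \<partial>(MX \<Otimes>\<^sub>M MA \<Otimes>\<^sub>M MR2 \<Otimes>\<^sub>M lborel)) =
      (\<integral>\<^sup>+ x. \<integral>\<^sup>+ a. \<integral>\<^sup>+ s. \<integral>\<^sup>+ y. ennreal (px x * pol x a * q1 x a r * q2 r s * qy s y) \<partial>lborel \<partial>MR2 \<partial>MA \<partial>MX)"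
    by (subst nn_integral_iterated4[OF sigma_finite_A sigma_finite_R2 lborel.sigma_finite_measure_axioms])
      (measurable, simp add: jdens_def)
  also have "\<dots> = (\<integral>\<^sup>+ x. \<integral>\<^sup>+ a. ennreal (dens_XA pol (x, a) * q1 x a r) \<partial>MA \<partial>MX)"
    using r by (simp add: K3.nn_integral_cmult_kernel K2.nn_integral_cmult_kernel dens_XA_def
        px_nonneg policy_nonneg q1_nonneg q2_nonneg cong: nn_integral_cong)
  also have "\<dots> = (\<integral>\<^sup>+ xa. ennreal (dens_XA pol xa * q1 (fst xa) (snd xa) r) \<partial>(MX \<Otimes>\<^sub>M MA))"
    using r by (subst sigma_finite_measure.nn_integral_fst[OF sigma_finite_A, symmetric]) simp_all
  finally show ?thesis
    by (simp add: dens_R1_def K1.next_density_def)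
qed

lemma marg_r2_eq:
  assumes s: "s \<in> space MR2"
  shows "marg_r2 MX MA MR1 px pol q1 q2 qy s = dens_R2 pol s"
proof -
  let ?j = "\<lambda>(x, a, r, y). jdens px pol q1 q2 qy (x, a, r, s, y)"
  have [measurable]: "?j \<in> borel_measurable (MX \<Otimes>\<^sub>M MA \<Otimes>\<^sub>M MR1 \<Otimes>\<^sub>M lborel)"
    using s unfolding jdens_def by measurable
  have "marg_r2 MX MA MR1 px pol q1 q2 qy s = enn2real (\<integral>\<^sup>+ p. ennreal (?j p) \<partial>(MX \<Otimes>\<^sub>M MA \<Otimes>\<^sub>M MR1 \<Otimes>\<^sub>M lborel))"
    unfolding marg_r2_def
    by (rule integral_eq_nn_integral) (measurable, auto simp: jdens_def px_nonneg policy_nonneg q1_nonneg q2_nonneg qy_nonneg)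
  also have "(\<integral>\<^sup>+ p. ennreal (?j p) \<partial>(MX \<Otimes>\<^sub>M MA \<Otimes>\<^sub>M MR1 \<Otimes>\<^sub>M lborel)) =
      (\<integral>\<^sup>+ x. \<integral>\<^sup>+ a. \<integral>\<^sup>+ r. \<integral>\<^sup>+ y. ennreal (px x * pol x a * q1 x a r * q2 r s * qy s y) \<partial>lborel \<partial>MR1 \<partial>MA \<partial>MX)"
    by (subst nn_integral_iterated4[OF sigma_finite_A sigma_finite_R1 lborel.sigma_finite_measure_axioms])
      (measurable, simp add: jdens_def)
  also have "\<dots> = (\<integral>\<^sup>+ x. \<integral>\<^sup>+ a. \<integral>\<^sup>+ r. ennreal (px x * pol x a * q1 x a r) * ennreal (q2 r s) \<partial>MR1 \<partial>MA \<partial>MX)"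
    using s by (simp add: K3.nn_integral_cmult_kernel ennreal_mult px_nonneg policy_nonneg q1_nonneg q2_nonneg
        cong: nn_integral_cong)
  also have "\<dots> = (\<integral>\<^sup>+ r. ennreal (dens_R1 pol r * q2 r s) \<partial>MR1)"
    using s by (simp add: nn_integral_dens_R1_iterated ennreal_mult dens_R1_nonneg q2_nonneg)
  finally show ?thesis
    by (simp add: dens_R2_def K2.next_density_def)
qed

lemma marg_y_eq: "marg_y MX MA MR1 MR2 px pol q1 q2 qy y = dens_Y pol y"
proof -
  let ?j = "\<lambda>(x, a, r, s). jdens px pol q1 q2 qy (x, a, r, s, y)"
  have y: "y \<in> space lborel"
    by simp
  have [measurable]: "?j \<in> borel_measurable (MX \<Otimes>\<^sub>M MA \<Otimes>\<^sub>M MR1 \<Otimes>\<^sub>M MR2)"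
    using y unfolding jdens_def by measurable
  have "marg_y MX MA MR1 MR2 px pol q1 q2 qy y = enn2real (\<integral>\<^sup>+ p. ennreal (?j p) \<partial>(MX \<Otimes>\<^sub>M MA \<Otimes>\<^sub>M MR1 \<Otimes>\<^sub>M MR2))"
    unfolding marg_y_def
    by (rule integral_eq_nn_integral) (measurable, auto simp: jdens_def px_nonneg policy_nonneg q1_nonneg q2_nonneg qy_nonneg)
  also have "(\<integral>\<^sup>+ p. ennreal (?j p) \<partial>(MX \<Otimes>\<^sub>M MA \<Otimes>\<^sub>M MR1 \<Otimes>\<^sub>M MR2)) =
      (\<integral>\<^sup>+ x. \<integral>\<^sup>+ a. \<integral>\<^sup>+ r. \<integral>\<^sup>+ s. ennreal (px x * pol x a * q1 x a r * q2 r s) * ennreal (qy s y) \<partial>MR2 \<partial>MR1 \<partial>MA \<partial>MX)"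
    by (subst nn_integral_iterated4[OF sigma_finite_A sigma_finite_R1 sigma_finite_R2])
      (measurable, simp add: jdens_def ennreal_mult px_nonneg policy_nonneg q1_nonneg q2_nonneg qy_nonneg)
  also have "\<dots> = (\<integral>\<^sup>+ s. ennreal (dens_R2 pol s * qy s y) \<partial>MR2)"
    by (simp add: nn_integral_dens_R2_iterated ennreal_mult dens_R2_nonneg qy_nonneg)
  finally show ?thesis
    by (simp add: dens_Y_def K3.next_density_def)
qed

end

end

section \<open>Importance weights along the chain\<close>

locale off_policy_chain = embedding_chain MX MA MR1 MR2 px q1 q2 qy
  for MX :: "'x measure" and MA :: "'a measure" and MR1 :: "'r measure" and MR2 :: "'s measure"
    and px q1 q2 qy +
  fixes pib pis :: "'x \<Rightarrow> 'a \<Rightarrow> real"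
  assumes policy_pib: "policy pib" and policy_pis: "policy pis"
    and abs_cont: "\<And>x a. 0 < pis x a \<Longrightarrow> 0 < pib x a"
begin

abbreviation "Pb \<equiv> jmeas MX MA MR1 MR2 px pib q1 q2 qy"
abbreviation "Ps \<equiv> jmeas MX MA MR1 MR2 px pis q1 q2 qy"

definition w_XA :: "'x \<times> 'a \<Rightarrow> real" where
  "w_XA xa = pis (fst xa) (snd xa) / pib (fst xa) (snd xa)"

definition w_R1 :: "'r \<Rightarrow> real" where
  "w_R1 r = dens_R1 pis r / dens_R1 pib r"

definition w_R2 :: "'s \<Rightarrow> real" where
  "w_R2 s = dens_R2 pis s / dens_R2 pib s"

definition w_Y :: "real \<Rightarrow> real" where
  "w_Y y = dens_Y pis y / dens_Y pib y"

lemma dens_XA_ratio: "dens_XA pib xa * w_XA xa = dens_XA pis xa"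
proof (cases "pib (fst xa) (snd xa) = 0")
  case True
  then have "pis (fst xa) (snd xa) = 0"
    using abs_cont[of "fst xa" "snd xa"] policy_nonneg[OF policy_pis, of "fst xa" "snd xa"] by linarith
  then show ?thesis
    using True by (simp add: dens_XA_def w_XA_def)
qed (simp add: dens_XA_def w_XA_def)

lemma w_XA_nonneg: "0 \<le> w_XA xa"
  using policy_pib policy_pis by (simp add: w_XA_def policy_nonneg)

lemma measurable_w_XA[measurable]: "w_XA \<in> borel_measurable (MX \<Otimes>\<^sub>M MA)"
  using policy_pib policy_pis unfolding w_XA_def by measurable

sublocale RW1: kernel_density_ratio "MX \<Otimes>\<^sub>M MA" MR1 "\<lambda>xa r. q1 (fst xa) (snd xa) r" "dens_XA pib" "dens_XA pis" w_XA
  by (intro kernel_density_ratio.intro kernel_density_ratio_axioms.intro K1.transition_kernel_axioms)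
    (use policy_pib policy_pis in \<open>simp_all add: dens_XA_nonneg nn_integral_dens_XA dens_XA_ratio
      w_XA_nonneg\<close>)

lemma AE_dens_R1_ratio: "AE r in MR1. dens_R1 pib r * w_R1 r = dens_R1 pis r"
  using RW1.AE_next_density_ratio by (simp add: dens_R1_def w_R1_def)

lemma measurable_w_R1[measurable]: "w_R1 \<in> borel_measurable MR1"
  using policy_pib policy_pis unfolding w_R1_def by measurable

sublocale RW2: kernel_density_ratio MR1 MR2 q2 "dens_R1 pib" "dens_R1 pis" w_R1
  by (intro kernel_density_ratio.intro kernel_density_ratio_axioms.intro K2.transition_kernel_axioms)
    (use policy_pib policy_pis AE_dens_R1_ratio in \<open>simp_all add: dens_R1_nonneg nn_integral_dens_R1
      w_R1_def\<close>)

lemma AE_dens_R2_ratio: "AE s in MR2. dens_R2 pib s * w_R2 s = dens_R2 pis s"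
  using RW2.AE_next_density_ratio by (simp add: dens_R2_def w_R2_def w_R1_def)

lemma measurable_w_R2[measurable]: "w_R2 \<in> borel_measurable MR2"
  using policy_pib policy_pis unfolding w_R2_def by measurable

sublocale RW3: kernel_density_ratio MR2 lborel qy "dens_R2 pib" "dens_R2 pis" w_R2
  by (intro kernel_density_ratio.intro kernel_density_ratio_axioms.intro K3.transition_kernel_axioms)
    (use policy_pib policy_pis AE_dens_R2_ratio in \<open>simp_all add: dens_R2_nonneg nn_integral_dens_R2
      w_R2_def\<close>)

lemma AE_dens_Y_ratio: "AE y in lborel. dens_Y pib y * w_Y y = dens_Y pis y"
  using RW3.AE_next_density_ratio by (simp add: dens_Y_def w_Y_def w_R2_def)

lemma measurable_w_Y[measurable]: "w_Y \<in> borel_measurable lborel"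
  using policy_pib policy_pis unfolding w_Y_def by measurable

definition w_IPW :: "'x \<times> 'a \<times> 'r \<times> 's \<times> real \<Rightarrow> real" where
  "w_IPW = (\<lambda>(x, a, r, s, y). pis x a / pib x a)"

definition w_G1 :: "'x \<times> 'a \<times> 'r \<times> 's \<times> real \<Rightarrow> real" where
  "w_G1 = (\<lambda>(x, a, r, s, y). marg_r1 MX MA MR2 px pis q1 q2 qy r / marg_r1 MX MA MR2 px pib q1 q2 qy r)"

definition w_G2 :: "'x \<times> 'a \<times> 'r \<times> 's \<times> real \<Rightarrow> real" where
  "w_G2 = (\<lambda>(x, a, r, s, y). marg_r2 MX MA MR1 px pis q1 q2 qy s / marg_r2 MX MA MR1 px pib q1 q2 qy s)"

definition w_MR :: "'x \<times> 'a \<times> 'r \<times> 's \<times> real \<Rightarrow> real" where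
  "w_MR = (\<lambda>(x, a, r, s, y). marg_y MX MA MR1 MR2 px pis q1 q2 qy y / marg_y MX MA MR1 MR2 px pib q1 q2 qy y)"

lemma w_IPW_eq: "w_IPW (x, a, r, s, y) = w_XA (x, a)"
  by (simp add: w_IPW_def w_XA_def)

lemma w_G1_eq: "r \<in> space MR1 \<Longrightarrow> w_G1 (x, a, r, s, y) = w_R1 r"
  using policy_pib policy_pis by (simp add: w_G1_def w_R1_def marg_r1_eq)

lemma w_G2_eq: "s \<in> space MR2 \<Longrightarrow> w_G2 (x, a, r, s, y) = w_R2 s"
  using policy_pib policy_pis by (simp add: w_G2_def w_R2_def marg_r2_eq)

lemma w_MR_eq: "w_MR (x, a, r, s, y) = w_Y y"
  using policy_pib policy_pis by (simp add: w_MR_def w_Y_def marg_y_eq)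

definition outcome_reweighting :: "('x \<times> 'a \<times> 'r \<times> 's \<times> real \<Rightarrow> real) \<Rightarrow> bool" where
  "outcome_reweighting W \<longleftrightarrow> W \<in> borel_measurable (MX \<Otimes>\<^sub>M MA \<Otimes>\<^sub>M MR1 \<Otimes>\<^sub>M MR2 \<Otimes>\<^sub>M lborel) \<and>
    (\<forall>\<omega>\<in>space (MX \<Otimes>\<^sub>M MA \<Otimes>\<^sub>M MR1 \<Otimes>\<^sub>M MR2 \<Otimes>\<^sub>M lborel). 0 \<le> W \<omega>) \<and>
    (\<forall>f\<in>borel_measurable borel. (\<integral>\<^sup>+ \<omega>. ennreal (W \<omega>) * f (yof \<omega>) \<partial>Pb) = (\<integral>\<^sup>+ \<omega>. f (yof \<omega>) \<partial>Ps))"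

definition second_moment :: "('x \<times> 'a \<times> 'r \<times> 's \<times> real \<Rightarrow> real) \<Rightarrow> ennreal" where
  "second_moment W = (\<integral>\<^sup>+ \<omega>. ennreal ((W \<omega> * yof \<omega>)\<^sup>2) \<partial>Pb)"

lemma outcome_reweighting_w_IPW: "outcome_reweighting w_IPW"
  unfolding outcome_reweighting_def
proof (intro conjI ballI allI)
  show "w_IPW \<in> borel_measurable (MX \<Otimes>\<^sub>M MA \<Otimes>\<^sub>M MR1 \<Otimes>\<^sub>M MR2 \<Otimes>\<^sub>M lborel)"
    using policy_pib policy_pis unfolding w_IPW_def by measurable
  show "0 \<le> w_IPW \<omega>" for \<omega>
    using w_XA_nonneg by (cases \<omega>) (simp add: w_IPW_eq)
  fix f :: "real \<Rightarrow> ennreal" assume [measurable]: "f \<in> borel_measurable borel"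
  have "(\<integral>\<^sup>+ \<omega>. ennreal (w_IPW \<omega>) * f (yof \<omega>) \<partial>Pb) = (\<integral>\<^sup>+ (x, a, r, s, y). ennreal (w_XA (x, a)) * f y \<partial>Pb)"
    by (rule nn_integral_jmeas_cong) (simp add: yof_def w_IPW_eq)
  also have "\<dots> = (\<integral>\<^sup>+ xa. ennreal (dens_XA pib xa) * ennreal (w_XA xa) * cond_XA f xa \<partial>(MX \<Otimes>\<^sub>M MA))"
    by (rule nn_integral_jmeas_XA[OF policy_pib]) measurable
  also have "\<dots> = (\<integral>\<^sup>+ xa. ennreal (dens_XA pis xa) * 1 * cond_XA f xa \<partial>(MX \<Otimes>\<^sub>M MA))"
    using nn_integral_density_ratio[of "dens_XA pib" w_XA "dens_XA pis"] dens_XA_ratio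
      dens_XA_nonneg[OF policy_pib] by simp
  also have "\<dots> = (\<integral>\<^sup>+ (x, a, r, s, y). 1 * f y \<partial>Ps)"
    by (rule nn_integral_jmeas_XA[OF policy_pis, symmetric]) measurable
  also have "\<dots> = (\<integral>\<^sup>+ \<omega>. f (yof \<omega>) \<partial>Ps)"
    by (rule nn_integral_jmeas_cong) (simp add: yof_def)
  finally show "(\<integral>\<^sup>+ \<omega>. ennreal (w_IPW \<omega>) * f (yof \<omega>) \<partial>Pb) = (\<integral>\<^sup>+ \<omega>. f (yof \<omega>) \<partial>Ps)" .
qed

lemma outcome_reweighting_w_G1: "outcome_reweighting w_G1"
  unfolding outcome_reweighting_def
proof (intro conjI ballI)
  have "w_G1 \<omega> = w_R1 (fst (snd (snd \<omega>)))" if "\<omega> \<in> space (MX \<Otimes>\<^sub>M MA \<Otimes>\<^sub>M MR1 \<Otimes>\<^sub>M MR2 \<Otimes>\<^sub>M lborel)" for \<omega>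
    using that by (cases \<omega>) (auto simp: space_pair_measure w_G1_eq)
  then show "w_G1 \<in> borel_measurable (MX \<Otimes>\<^sub>M MA \<Otimes>\<^sub>M MR1 \<Otimes>\<^sub>M MR2 \<Otimes>\<^sub>M lborel)"
    by (subst Sigma_Algebra.measurable_cong) auto
  show "0 \<le> w_G1 \<omega>" if "\<omega> \<in> space (MX \<Otimes>\<^sub>M MA \<Otimes>\<^sub>M MR1 \<Otimes>\<^sub>M MR2 \<Otimes>\<^sub>M lborel)" for \<omega>
    using that RW2.ratio_nonneg(3) by (cases \<omega>) (auto simp: space_pair_measure w_G1_eq)
  fix f :: "real \<Rightarrow> ennreal" assume [measurable]: "f \<in> borel_measurable borel"
  have "(\<integral>\<^sup>+ \<omega>. ennreal (w_G1 \<omega>) * f (yof \<omega>) \<partial>Pb) = (\<integral>\<^sup>+ (x, a, r, s, y). ennreal (w_R1 r) * f y \<partial>Pb)"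
    by (rule nn_integral_jmeas_cong) (simp add: yof_def w_G1_eq)
  also have "\<dots> = (\<integral>\<^sup>+ r. ennreal (dens_R1 pib r) * ennreal (w_R1 r) * cond_R1 f r \<partial>MR1)"
    by (rule nn_integral_jmeas_R1[OF policy_pib]) measurable
  also have "\<dots> = (\<integral>\<^sup>+ r. ennreal (dens_R1 pis r) * 1 * cond_R1 f r \<partial>MR1)"
    using nn_integral_density_ratio[OF AE_dens_R1_ratio] dens_R1_nonneg[OF policy_pib] by simp
  also have "\<dots> = (\<integral>\<^sup>+ (x, a, r, s, y). 1 * f y \<partial>Ps)"
    by (rule nn_integral_jmeas_R1[OF policy_pis, symmetric]) measurable
  also have "\<dots> = (\<integral>\<^sup>+ \<omega>. f (yof \<omega>) \<partial>Ps)"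
    by (rule nn_integral_jmeas_cong) (simp add: yof_def)
  finally show "(\<integral>\<^sup>+ \<omega>. ennreal (w_G1 \<omega>) * f (yof \<omega>) \<partial>Pb) = (\<integral>\<^sup>+ \<omega>. f (yof \<omega>) \<partial>Ps)" .
qed

lemma outcome_reweighting_w_G2: "outcome_reweighting w_G2"
  unfolding outcome_reweighting_def
proof (intro conjI ballI)
  have "w_G2 \<omega> = w_R2 (fst (snd (snd (snd \<omega>))))" if "\<omega> \<in> space (MX \<Otimes>\<^sub>M MA \<Otimes>\<^sub>M MR1 \<Otimes>\<^sub>M MR2 \<Otimes>\<^sub>M lborel)" for \<omega>
    using that by (cases \<omega>) (auto simp: space_pair_measure w_G2_eq)
  then show "w_G2 \<in> borel_measurable (MX \<Otimes>\<^sub>M MA \<Otimes>\<^sub>M MR1 \<Otimes>\<^sub>M MR2 \<Otimes>\<^sub>M lborel)"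
    by (subst Sigma_Algebra.measurable_cong) auto
  show "0 \<le> w_G2 \<omega>" if "\<omega> \<in> space (MX \<Otimes>\<^sub>M MA \<Otimes>\<^sub>M MR1 \<Otimes>\<^sub>M MR2 \<Otimes>\<^sub>M lborel)" for \<omega>
    using that RW3.ratio_nonneg(3) by (cases \<omega>) (auto simp: space_pair_measure w_G2_eq)
  fix f :: "real \<Rightarrow> ennreal" assume [measurable]: "f \<in> borel_measurable borel"
  have "(\<integral>\<^sup>+ \<omega>. ennreal (w_G2 \<omega>) * f (yof \<omega>) \<partial>Pb) = (\<integral>\<^sup>+ (x, a, r, s, y). ennreal (w_R2 s) * f y \<partial>Pb)"
    by (rule nn_integral_jmeas_cong) (simp add: yof_def w_G2_eq)
  also have "\<dots> = (\<integral>\<^sup>+ s. ennreal (dens_R2 pib s) * ennreal (w_R2 s) * cond_R2 f s \<partial>MR2)"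
    by (rule nn_integral_jmeas_R2[OF policy_pib]) measurable
  also have "\<dots> = (\<integral>\<^sup>+ s. ennreal (dens_R2 pis s) * 1 * cond_R2 f s \<partial>MR2)"
    using nn_integral_density_ratio[OF AE_dens_R2_ratio] dens_R2_nonneg[OF policy_pib] by simp
  also have "\<dots> = (\<integral>\<^sup>+ (x, a, r, s, y). 1 * f y \<partial>Ps)"
    by (rule nn_integral_jmeas_R2[OF policy_pis, symmetric]) measurable
  also have "\<dots> = (\<integral>\<^sup>+ \<omega>. f (yof \<omega>) \<partial>Ps)"
    by (rule nn_integral_jmeas_cong) (simp add: yof_def)
  finally show "(\<integral>\<^sup>+ \<omega>. ennreal (w_G2 \<omega>) * f (yof \<omega>) \<partial>Pb) = (\<integral>\<^sup>+ \<omega>. f (yof \<omega>) \<partial>Ps)" .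
qed

lemma outcome_reweighting_w_MR: "outcome_reweighting w_MR"
  unfolding outcome_reweighting_def
proof (intro conjI ballI)
  have "w_MR = (\<lambda>\<omega>. w_Y (snd (snd (snd (snd \<omega>)))))"
    by (auto simp: w_MR_eq)
  then show "w_MR \<in> borel_measurable (MX \<Otimes>\<^sub>M MA \<Otimes>\<^sub>M MR1 \<Otimes>\<^sub>M MR2 \<Otimes>\<^sub>M lborel)"
    by simp
  show "0 \<le> w_MR \<omega>" for \<omega>
    using policy_pib policy_pis by (cases \<omega>) (simp add: w_MR_eq w_Y_def dens_Y_nonneg)
  fix f :: "real \<Rightarrow> ennreal" assume [measurable]: "f \<in> borel_measurable borel"
  have "(\<integral>\<^sup>+ \<omega>. ennreal (w_MR \<omega>) * f (yof \<omega>) \<partial>Pb) = (\<integral>\<^sup>+ (x, a, r, s, y). ennreal (w_Y y) * f y \<partial>Pb)"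
    by (rule nn_integral_jmeas_cong) (simp add: yof_def w_MR_eq)
  also have "\<dots> = (\<integral>\<^sup>+ y. ennreal (dens_Y pib y) * (ennreal (w_Y y) * f y) \<partial>lborel)"
    by (rule nn_integral_jmeas_Y[OF policy_pib]) measurable
  also have "\<dots> = (\<integral>\<^sup>+ y. ennreal (dens_Y pis y) * f y \<partial>lborel)"
    using nn_integral_density_ratio[OF AE_dens_Y_ratio] dens_Y_nonneg[OF policy_pib] by (simp add: mult.assoc)
  also have "\<dots> = (\<integral>\<^sup>+ (x, a, r, s, y). f y \<partial>Ps)"
    by (rule nn_integral_jmeas_Y[OF policy_pis, symmetric]) measurable
  also have "\<dots> = (\<integral>\<^sup>+ \<omega>. f (yof \<omega>) \<partial>Ps)"
    by (rule nn_integral_jmeas_cong) (simp add: yof_def)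
  finally show "(\<integral>\<^sup>+ \<omega>. ennreal (w_MR \<omega>) * f (yof \<omega>) \<partial>Pb) = (\<integral>\<^sup>+ \<omega>. f (yof \<omega>) \<partial>Ps)" .
qed

lemma second_moment_w_G1_le: "second_moment w_G1 \<le> second_moment w_IPW"
proof -
  let ?sq = "\<lambda>y::real. ennreal (y\<^sup>2)"
  have "second_moment w_G1 = (\<integral>\<^sup>+ (x, a, r, s, y). ennreal ((w_R1 r)\<^sup>2) * ?sq y \<partial>Pb)"
    unfolding second_moment_def
    by (rule nn_integral_jmeas_cong) (simp add: yof_def w_G1_eq power_mult_distrib ennreal_mult)
  also have "\<dots> = (\<integral>\<^sup>+ r. ennreal (dens_R1 pib r) * ennreal ((w_R1 r)\<^sup>2) * cond_R1 ?sq r \<partial>MR1)"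
    by (rule nn_integral_jmeas_R1[OF policy_pib]) measurable
  also have "\<dots> \<le> (\<integral>\<^sup>+ xa. ennreal (dens_XA pib xa) * ennreal ((w_XA xa)\<^sup>2) * cond_XA ?sq xa \<partial>(MX \<Otimes>\<^sub>M MA))"
    using RW1.nn_integral_next_density_ratio_square_le[of "cond_R1 ?sq"]
    by (simp add: dens_R1_def w_R1_def cond_XA_def)
  also have "\<dots> = (\<integral>\<^sup>+ (x, a, r, s, y). ennreal ((w_XA (x, a))\<^sup>2) * ?sq y \<partial>Pb)"
    by (rule nn_integral_jmeas_XA[OF policy_pib, symmetric]) measurable
  also have "\<dots> = second_moment w_IPW"
    unfolding second_moment_def
    by (rule nn_integral_jmeas_cong) (simp add: yof_def w_IPW_eq power_mult_distrib ennreal_mult)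
  finally show ?thesis .
qed

lemma second_moment_w_G2_le: "second_moment w_G2 \<le> second_moment w_G1"
proof -
  let ?sq = "\<lambda>y::real. ennreal (y\<^sup>2)"
  have "second_moment w_G2 = (\<integral>\<^sup>+ (x, a, r, s, y). ennreal ((w_R2 s)\<^sup>2) * ?sq y \<partial>Pb)"
    unfolding second_moment_def
    by (rule nn_integral_jmeas_cong) (simp add: yof_def w_G2_eq power_mult_distrib ennreal_mult)
  also have "\<dots> = (\<integral>\<^sup>+ s. ennreal (dens_R2 pib s) * ennreal ((w_R2 s)\<^sup>2) * cond_R2 ?sq s \<partial>MR2)"
    by (rule nn_integral_jmeas_R2[OF policy_pib]) measurable
  also have "\<dots> \<le> (\<integral>\<^sup>+ r. ennreal (dens_R1 pib r) * ennreal ((w_R1 r)\<^sup>2) * cond_R1 ?sq r \<partial>MR1)"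
    using RW2.nn_integral_next_density_ratio_square_le[of "cond_R2 ?sq"]
    by (simp add: dens_R2_def w_R2_def cond_R1_def)
  also have "\<dots> = (\<integral>\<^sup>+ (x, a, r, s, y). ennreal ((w_R1 r)\<^sup>2) * ?sq y \<partial>Pb)"
    by (rule nn_integral_jmeas_R1[OF policy_pib, symmetric]) measurable
  also have "\<dots> = second_moment w_G1"
    unfolding second_moment_def
    by (rule nn_integral_jmeas_cong) (simp add: yof_def w_G1_eq power_mult_distrib ennreal_mult)
  finally show ?thesis .
qed

lemma second_moment_w_MR_le: "second_moment w_MR \<le> second_moment w_G2"
proof -
  let ?sq = "\<lambda>y::real. ennreal (y\<^sup>2)"
  have "second_moment w_MR = (\<integral>\<^sup>+ (x, a, r, s, y). ennreal ((w_Y y)\<^sup>2) * ?sq y \<partial>Pb)"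
    unfolding second_moment_def
    by (rule nn_integral_jmeas_cong) (simp add: yof_def w_MR_eq power_mult_distrib ennreal_mult)
  also have "\<dots> = (\<integral>\<^sup>+ y. ennreal (dens_Y pib y) * ennreal ((w_Y y)\<^sup>2) * ?sq y \<partial>lborel)"
    by (subst nn_integral_jmeas_Y[OF policy_pib]) (simp_all add: mult.assoc)
  also have "\<dots> \<le> (\<integral>\<^sup>+ s. ennreal (dens_R2 pib s) * ennreal ((w_R2 s)\<^sup>2) * cond_R2 ?sq s \<partial>MR2)"
    using RW3.nn_integral_next_density_ratio_square_le[of ?sq]
    by (simp add: dens_Y_def w_Y_def cond_R2_def)
  also have "\<dots> = (\<integral>\<^sup>+ (x, a, r, s, y). ennreal ((w_R2 s)\<^sup>2) * ?sq y \<partial>Pb)"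
    by (rule nn_integral_jmeas_R2[OF policy_pib, symmetric]) measurable
  also have "\<dots> = second_moment w_G2"
    unfolding second_moment_def
    by (rule nn_integral_jmeas_cong) (simp add: yof_def w_G2_eq power_mult_distrib ennreal_mult)
  finally show ?thesis .
qed

lemma second_moment_w_IPW_finite:
  assumes "integrable Pb (\<lambda>(x, a, r, s, y). (pis x a / pib x a * y)\<^sup>2)"
  shows "second_moment w_IPW \<noteq> \<infinity>"
proof -
  have "second_moment w_IPW = (\<integral>\<^sup>+ \<omega>. ennreal ((\<lambda>(x, a, r, s, y). (pis x a / pib x a * y)\<^sup>2) \<omega>) \<partial>Pb)"
    unfolding second_moment_def by (intro nn_integral_cong) (auto simp: w_IPW_def yof_def split: prod.splits)
  with integrableD(2)[OF assms] show ?thesis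
    by simp
qed

lemma sample_mean_moments:
  assumes W: "outcome_reweighting W" and finite: "second_moment W \<noteq> \<infinity>" and n: "1 \<le> n"
  shows "(\<integral>\<omega>. west n W \<omega> \<partial>PiM {..<n} (\<lambda>_. Pb)) = (\<integral>z. yof z \<partial>Ps)"
    and "var (PiM {..<n} (\<lambda>_. Pb)) (west n W) = (enn2real (second_moment W) - (\<integral>z. yof z \<partial>Ps)\<^sup>2) / real n"
proof -
  interpret Pb: prob_space Pb
    by (rule prob_space_jmeas[OF policy_pib])
  let ?g = "\<lambda>z. W z * yof z"
  have [measurable]: "W \<in> borel_measurable (MX \<Otimes>\<^sub>M MA \<Otimes>\<^sub>M MR1 \<Otimes>\<^sub>M MR2 \<Otimes>\<^sub>M lborel)"
    and W_nonneg: "\<And>\<omega>. \<omega> \<in> space Pb \<Longrightarrow> 0 \<le> W \<omega>"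
    and reweight: "\<And>f. f \<in> borel_measurable borel \<Longrightarrow>
      (\<integral>\<^sup>+ \<omega>. ennreal (W \<omega>) * f (yof \<omega>) \<partial>Pb) = (\<integral>\<^sup>+ \<omega>. f (yof \<omega>) \<partial>Ps)"
    using W by (auto simp: outcome_reweighting_def jmeas_def)
  have g[measurable]: "?g \<in> borel_measurable Pb"
    unfolding jmeas_def by simp
  have west: "west n W = sample_mean n ?g"
    by (simp add: fun_eq_iff west_def sample_mean_def)
  have g2: "integrable Pb (\<lambda>z. (?g z)\<^sup>2)"
    using finite by (intro integrableI_nonneg) (auto simp: second_moment_def less_top)
  have gi: "integrable Pb ?g"
    by (rule Pb.square_integrable_imp_integrable[OF g g2])
  have pos: "(\<integral>\<^sup>+ \<omega>. ennreal (?g \<omega>) \<partial>Pb) = (\<integral>\<^sup>+ \<omega>. ennreal (yof \<omega>) \<partial>Ps)"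
    using W_nonneg by (subst reweight[symmetric]) (auto intro!: nn_integral_cong simp: ennreal_mult')
  have neg: "(\<integral>\<^sup>+ \<omega>. ennreal (- ?g \<omega>) \<partial>Pb) = (\<integral>\<^sup>+ \<omega>. ennreal (- yof \<omega>) \<partial>Ps)"
    using W_nonneg by (subst reweight[symmetric]) (auto intro!: nn_integral_cong simp: ennreal_mult'[symmetric])
  have mean: "(\<integral>\<omega>. ?g \<omega> \<partial>Pb) = (\<integral>z. yof z \<partial>Ps)"
    by (rule integral_eq_of_nn_integral_parts(2)[OF gi pos neg]) (simp add: jmeas_def)
  show "(\<integral>\<omega>. west n W \<omega> \<partial>PiM {..<n} (\<lambda>_. Pb)) = (\<integral>z. yof z \<partial>Ps)"
    unfolding west Pb.integral_sample_mean[OF gi n] by (rule mean)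
  have "var Pb ?g = Pb.expectation (\<lambda>z. (?g z)\<^sup>2) - (Pb.expectation ?g)\<^sup>2"
    unfolding var_def by (rule Pb.variance_eq[OF gi g2])
  also have "Pb.expectation (\<lambda>z. (?g z)\<^sup>2) = enn2real (second_moment W)"
    unfolding second_moment_def by (rule integral_eq_nn_integral) auto
  finally show "var (PiM {..<n} (\<lambda>_. Pb)) (west n W) = (enn2real (second_moment W) - (\<integral>z. yof z \<partial>Ps)\<^sup>2) / real n"
    unfolding west Pb.var_sample_mean[OF g g2 n] mean by simp
qed

lemma var_west_mono:
  assumes W: "outcome_reweighting W" and W': "outcome_reweighting W'"
    and le: "second_moment W \<le> second_moment W'" and finite: "second_moment W' \<noteq> \<infinity>" and n: "1 \<le> n"
  shows "var (PiM {..<n} (\<lambda>_. Pb)) (west n W) \<le> var (PiM {..<n} (\<lambda>_. Pb)) (west n W')"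
proof -
  have finite_W: "second_moment W \<noteq> \<infinity>"
    using le finite by (auto simp: top_unique)
  have "enn2real (second_moment W) \<le> enn2real (second_moment W')"
    using le finite by (simp add: enn2real_mono less_top)
  then show ?thesis
    using n by (simp add: sample_mean_moments(2)[OF W finite_W n] sample_mean_moments(2)[OF W' finite n]
        divide_right_mono)
qed

end

theorem propositionA4:
  fixes MX :: "'x measure" and MA :: "'a measure" and MR1 :: "'r measure" and MR2 :: "'s measure"
    and px :: "'x \<Rightarrow> real" and pib pis :: "'x \<Rightarrow> 'a \<Rightarrow> real"
    and q1 :: "'x \<Rightarrow> 'a \<Rightarrow> 'r \<Rightarrow> real" and q2 :: "'r \<Rightarrow> 's \<Rightarrow> real"
    and qy :: "'s \<Rightarrow> real \<Rightarrow> real" and n :: nat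
  assumes sfX: "sigma_finite_measure MX" and sfA: "sigma_finite_measure MA"
    and sfR: "sigma_finite_measure MR1" and sfS: "sigma_finite_measure MR2"
    and px_meas: "px \<in> borel_measurable MX"
    and pib_meas: "(\<lambda>(x, a). pib x a) \<in> borel_measurable (MX \<Otimes>\<^sub>M MA)"
    and pis_meas: "(\<lambda>(x, a). pis x a) \<in> borel_measurable (MX \<Otimes>\<^sub>M MA)"
    and q1_meas: "(\<lambda>(x, a, r). q1 x a r) \<in> borel_measurable (MX \<Otimes>\<^sub>M MA \<Otimes>\<^sub>M MR1)"
    and q2_meas: "(\<lambda>(r, s). q2 r s) \<in> borel_measurable (MR1 \<Otimes>\<^sub>M MR2)"
    and qy_meas: "(\<lambda>(s, y). qy s y) \<in> borel_measurable (MR2 \<Otimes>\<^sub>M lborel)"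
    and px_nn: "\<And>x. px x \<ge> 0"
    and pib_nn: "\<And>x a. pib x a \<ge> 0" and pis_nn: "\<And>x a. pis x a \<ge> 0"
    and q1_nn: "\<And>x a r. q1 x a r \<ge> 0" and q2_nn: "\<And>r s. q2 r s \<ge> 0"
    and qy_nn: "\<And>s y. qy s y \<ge> 0"
    and px_norm: "(\<integral>\<^sup>+ x. ennreal (px x) \<partial>MX) = 1"
    and pib_norm: "\<And>x. x \<in> space MX \<Longrightarrow> (\<integral>\<^sup>+ a. ennreal (pib x a) \<partial>MA) = 1"
    and pis_norm: "\<And>x. x \<in> space MX \<Longrightarrow> (\<integral>\<^sup>+ a. ennreal (pis x a) \<partial>MA) = 1"
    and q1_norm: "\<And>x a. x \<in> space MX \<Longrightarrow> a \<in> space MA \<Longrightarrow> (\<integral>\<^sup>+ r. ennreal (q1 x a r) \<partial>MR1) = 1"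
    and q2_norm: "\<And>r. r \<in> space MR1 \<Longrightarrow> (\<integral>\<^sup>+ s. ennreal (q2 r s) \<partial>MR2) = 1"
    and qy_norm: "\<And>s. s \<in> space MR2 \<Longrightarrow> (\<integral>\<^sup>+ y. ennreal (qy s y) \<partial>lborel) = 1"
    and abs_cont: "\<And>x a. pis x a > 0 \<Longrightarrow> pib x a > 0"
    and sq_int: "integrable (jmeas MX MA MR1 MR2 px pib q1 q2 qy)
                   (\<lambda>(x, a, r, s, y). (pis x a / pib x a * y)\<^sup>2)"
    and n_pos: "n \<ge> 1"
  shows
   "let Pb = jmeas MX MA MR1 MR2 px pib q1 q2 qy;
        Ps = jmeas MX MA MR1 MR2 px pis q1 q2 qy;
        S = PiM {..<n} (\<lambda>_. Pb);
        wIPW = (\<lambda>(x, a, r, s, y). pis x a / pib x a);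
        wG1 = (\<lambda>(x, a, r, s, y). marg_r1 MX MA MR2 px pis q1 q2 qy r / marg_r1 MX MA MR2 px pib q1 q2 qy r);
        wG2 = (\<lambda>(x, a, r, s, y). marg_r2 MX MA MR1 px pis q1 q2 qy s / marg_r2 MX MA MR1 px pib q1 q2 qy s);
        wMR = (\<lambda>(x, a, r, s, y). marg_y MX MA MR1 MR2 px pis q1 q2 qy y / marg_y MX MA MR1 MR2 px pib q1 q2 qy y);
        vS = (\<integral>z. yof z \<partial>Ps)
    in (\<integral>\<omega>. west n wIPW \<omega> \<partial>S) = vS \<and> (\<integral>\<omega>. west n wG1 \<omega> \<partial>S) = vS \<and>
       (\<integral>\<omega>. west n wG2 \<omega> \<partial>S) = vS \<and> (\<integral>\<omega>. west n wMR \<omega> \<partial>S) = vS \<and>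
       var S (west n wIPW) \<ge> var S (west n wG1) \<and>
       var S (west n wG1) \<ge> var S (west n wG2) \<and>
       var S (west n wG2) \<ge> var S (west n wMR)"
proof -
  interpret embedding_chain MX MA MR1 MR2 px q1 q2 qy
    by (intro embedding_chain.intro) (simp_all add: assms)
  interpret off_policy_chain MX MA MR1 MR2 px q1 q2 qy pib pis
    by (intro off_policy_chain.intro off_policy_chain_axioms.intro embedding_chain_axioms)
      (simp_all add: policy_def assms)
  have finite_IPW: "second_moment w_IPW \<noteq> \<infinity>"
    by (rule second_moment_w_IPW_finite[OF sq_int])
  have finite_G1: "second_moment w_G1 \<noteq> \<infinity>"
    using second_moment_w_G1_le finite_IPW by (auto simp: top_unique)
  have finite_G2: "second_moment w_G2 \<noteq> \<infinity>"
    using second_moment_w_G2_le finite_G1 by (auto simp: top_unique)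
  have finite_MR: "second_moment w_MR \<noteq> \<infinity>"
    using second_moment_w_MR_le finite_G2 by (auto simp: top_unique)
  note reweighting = outcome_reweighting_w_IPW outcome_reweighting_w_G1 outcome_reweighting_w_G2
    outcome_reweighting_w_MR
  show ?thesis
    unfolding Let_def w_IPW_def[symmetric] w_G1_def[symmetric] w_G2_def[symmetric] w_MR_def[symmetric]
    using reweighting[THEN sample_mean_moments(1)] finite_IPW finite_G1 finite_G2 finite_MR n_pos
      var_west_mono[OF reweighting(2,1) second_moment_w_G1_le finite_IPW n_pos]
      var_west_mono[OF reweighting(3,2) second_moment_w_G2_le finite_G1 n_pos]
      var_west_mono[OF reweighting(4,3) second_moment_w_MR_le finite_G2 n_pos]
    by simp
qed

end
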